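(* Let $d\ge 2$ and $\Lambda>1$. There is a family $\mathcal{F}\subset C^\infty(\mathbb{T}^d;[1,\Lambda])$, dense in $C(\mathbb{T}^d;[1,\Lambda])$ with respect to the uniform norm, such that for every $a\in\mathcal{F}$ the following holds: for each uniformly continuous $u_0:\mathbb{R}^d\to\mathbb{R}$, if $(u^\varepsilon)_{\varepsilon>0}$ are the viscosity solutions of $$u^\varepsilon_t = a(\tfrac{x}{\varepsilon})\,\mathrm{tr}\big((\mathrm{Id}-\widehat{Du^\varepsilon}\otimes\widehat{Du^\varepsilon})D^2u^\varepsilon\big)+\varepsilon^{-1}Da(\tfrac{x}{\varepsilon})\cdot Du^\varepsilon \ \text{ in } \mathbb{R}^d\times(0,\infty),\qquad u^\varepsilon=u_0 \text{ on } \mathbb{R}^d\times\{0\},$$ then $\limsup^* u^\varepsilon\ \ge\ u_0\ \ge\ \liminf_* u^\varepsilon$ in $\mathbb{R}^d\times(0,\infty)$.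
   Context: $\widehat{p}=p/|p|$. $\mathbb{T}^d=\mathbb{R}^d/\mathbb{Z}^d$ and functions on it are identified with $\mathbb{Z}^d$-periodic functions. The half-relaxed limits are $\limsup^* u^\varepsilon(x,t)=\lim_{r\to0}\sup\{u^\varepsilon(y,s):0<\varepsilon<r,\ |y-x|+|s-t|<r\}$ and $\liminf_* u^\varepsilon(x,t)=\lim_{r\to0}\inf\{u^\varepsilon(y,s):0<\varepsilon<r,\ |y-x|+|s-t|<r\}$. Viscosity solutions of the degenerate geometric equation are understood in the standard sense (using semicontinuous envelopes of the operator at $Du=0$). *)

theory Defs
  imports "HOL-Analysis.Analysis" "HOL-Library.Liminf_Limsup"
begin

definition pdiff :: "'a::euclidean_space \<Rightarrow> ('a \<Rightarrow> real) \<Rightarrow> 'a \<Rightarrow> real" where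
  "pdiff b f x = frechet_derivative f (at x) b"

fun Ck :: "nat \<Rightarrow> ('a::euclidean_space \<Rightarrow> real) \<Rightarrow> bool" where
  "Ck 0 f = continuous_on UNIV f"
| "Ck (Suc k) f = ((\<forall>x. f differentiable (at x)) \<and> (\<forall>b\<in>Basis. Ck k (pdiff b f)))"

definition smooth_fun :: "('a::euclidean_space \<Rightarrow> real) \<Rightarrow> bool" where
  "smooth_fun f = (\<forall>k. Ck k f)"

section \<open>Periodic functions (functions on the torus)\<close>

definition zperiodic :: "(real^'d \<Rightarrow> real) \<Rightarrow> bool" where
  "zperiodic f = (\<forall>x z. (\<forall>i. z $ i \<in> \<int>) \<longrightarrow> f (x + z) = f x)"

definition grad :: "(real^'d \<Rightarrow> real) \<Rightarrow> real^'d \<Rightarrow> real^'d" where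
  "grad f y = (\<chi> i. frechet_derivative f (at y) (axis i 1))"

text \<open>G(x,p,X) = a(x/eps) tr((Id - phat (x) phat) X) + eps^-1 Da(x/eps) . p, phat = p/|p|
  (only meaningful for p nonzero; at p = 0 the envelopes are used).\<close>
definition geoG :: "(real^'d \<Rightarrow> real) \<Rightarrow> real \<Rightarrow> real^'d \<Rightarrow> real^'d \<Rightarrow> real^'d^'d \<Rightarrow> real" where
  "geoG a eps x p X =
     a ((1/eps) *\<^sub>R x) *
       (\<Sum>i\<in>UNIV. \<Sum>j\<in>UNIV. ((if i = j then 1 else 0) - (p /\<^sub>R norm p) $ i * (p /\<^sub>R norm p) $ j) * X $ j $ i)
     + (1/eps) * (grad a ((1/eps) *\<^sub>R x) \<bullet> p)"

text \<open>Upper / lower semicontinuous envelopes of G, taken over the region p nonzero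
  (G is continuous there, so they agree with G for p nonzero).\<close>
definition Gupper :: "(real^'d \<Rightarrow> real) \<Rightarrow> real \<Rightarrow> real^'d \<Rightarrow> real^'d \<Rightarrow> real^'d^'d \<Rightarrow> ereal" where
  "Gupper a eps x p X = Limsup (at (x, p, X) within {w. fst (snd w) \<noteq> 0})
       (\<lambda>(y, q, Y). ereal (geoG a eps y q Y))"

definition Glower :: "(real^'d \<Rightarrow> real) \<Rightarrow> real \<Rightarrow> real^'d \<Rightarrow> real^'d \<Rightarrow> real^'d^'d \<Rightarrow> ereal" where
  "Glower a eps x p X = Liminf (at (x, p, X) within {w. fst (snd w) \<noteq> 0})
       (\<lambda>(y, q, Y). ereal (geoG a eps y q Y))"

definition Dx :: "((real^'d) \<times> real \<Rightarrow> real) \<Rightarrow> (real^'d) \<times> real \<Rightarrow> real^'d" where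
  "Dx \<phi> z = (\<chi> i. frechet_derivative \<phi> (at z) (axis i 1, 0))"

definition Dxx :: "((real^'d) \<times> real \<Rightarrow> real) \<Rightarrow> (real^'d) \<times> real \<Rightarrow> real^'d^'d" where
  "Dxx \<phi> z = (\<chi> i j. frechet_derivative (\<lambda>w. frechet_derivative \<phi> (at w) (axis j 1, 0)) (at z) (axis i 1, 0))"

definition Dt :: "((real^'d) \<times> real \<Rightarrow> real) \<Rightarrow> (real^'d) \<times> real \<Rightarrow> real" where
  "Dt \<phi> z = frechet_derivative \<phi> (at z) (0, 1)"

definition visc_sub :: "(real^'d \<Rightarrow> real) \<Rightarrow> real \<Rightarrow> (real^'d \<Rightarrow> real \<Rightarrow> real) \<Rightarrow> bool" where
  "visc_sub a eps u = (\<forall>\<phi> x t. Ck 2 \<phi> \<and> t > 0 \<and>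
      (\<forall>\<^sub>F w in at (x, t). u (fst w) (snd w) - \<phi> w \<le> u x t - \<phi> (x, t)) \<longrightarrow>
      ereal (Dt \<phi> (x, t)) \<le> Gupper a eps x (Dx \<phi> (x, t)) (Dxx \<phi> (x, t)))"

definition visc_super :: "(real^'d \<Rightarrow> real) \<Rightarrow> real \<Rightarrow> (real^'d \<Rightarrow> real \<Rightarrow> real) \<Rightarrow> bool" where
  "visc_super a eps u = (\<forall>\<phi> x t. Ck 2 \<phi> \<and> t > 0 \<and>
      (\<forall>\<^sub>F w in at (x, t). u (fst w) (snd w) - \<phi> w \<ge> u x t - \<phi> (x, t)) \<longrightarrow>
      ereal (Dt \<phi> (x, t)) \<ge> Glower a eps x (Dx \<phi> (x, t)) (Dxx \<phi> (x, t)))"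

definition visc_solution :: "(real^'d \<Rightarrow> real) \<Rightarrow> real \<Rightarrow> (real^'d \<Rightarrow> real) \<Rightarrow> (real^'d \<Rightarrow> real \<Rightarrow> real) \<Rightarrow> bool" where
  "visc_solution a eps u0 u =
     (continuous_on {w :: (real^'d) \<times> real. snd w \<ge> 0} (\<lambda>w. u (fst w) (snd w)) \<and>
      (\<forall>x. u x 0 = u0 x) \<and> visc_sub a eps u \<and> visc_super a eps u)"

definition hr_limsup :: "(real \<Rightarrow> real^'d \<Rightarrow> real \<Rightarrow> real) \<Rightarrow> real^'d \<Rightarrow> real \<Rightarrow> ereal" where
  "hr_limsup u x t = (INF r\<in>{0<..}. SUP w\<in>{(e, y, s). 0 < e \<and> e < r \<and> norm (y - x) + \<bar>s - t\<bar> < r}.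
       ereal (u (fst w) (fst (snd w)) (snd (snd w))))"

definition hr_liminf :: "(real \<Rightarrow> real^'d \<Rightarrow> real \<Rightarrow> real) \<Rightarrow> real^'d \<Rightarrow> real \<Rightarrow> ereal" where
  "hr_liminf u x t = (SUP r\<in>{0<..}. INF w\<in>{(e, y, s). 0 < e \<and> e < r \<and> norm (y - x) + \<bar>s - t\<bar> < r}.
       ereal (u (fst w) (fst (snd w)) (snd (snd w))))"

end

theory Submission
  imports Defs
begin

(* Let S(z) = sum_i sin(pi z_i)^2, a periodic well vanishing exactly on the lattice.  Call a
   coefficient pinning if 2 pi^2 d a + Da . DS <= 0 on some shell s1 <= S <= s2 < 1/2 around the
   lattice points, i.e. if there its drift beats every curvature term.  For such a, the test
   function c - C max(0, S(x/eps) - s1)^3 - eta exp(L t) is a strict subsolution on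
   {S(x/eps) <= s2} and lies far below the solution beyond it.  Comparison on the cube of
   half-width eps/4 around a lattice point eps n, whose faces lie in {S(x/eps) >= 1/2}, then shows
   that a supersolution lying above c on that cube at time 0 still lies above c at (eps n, t).
   As the points eps n approach any x when eps -> 0, continuity of u0 gives
   u0(x) <= limsup* u^eps(x, t); the bound for liminf_* follows from the symmetry u -> -u, which
   exchanges sub- and supersolutions because the operator is odd in (Du, D^2u).  Pinning
   coefficients are dense: approximate a continuous periodic coefficient by a trigonometric
   polynomial (Stone-Weierstrass on the torus) and add a small bump sigma sin(omega (1/4 - S)) of
   high frequency omega, which creates a pinning shell around {S = 1/4}. *)

section \<open>Calculus of \<^const>\<open>Ck\<close>\<close>

lemma has_derivative_imp_pdiff: "(f has_derivative f') (at x) \<Longrightarrow> pdiff b f x = f' b"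
  unfolding pdiff_def using frechet_derivative_at by metis

lemma Ck_Suc_has_derivative: "Ck (Suc k) f \<Longrightarrow> (f has_derivative frechet_derivative f (at x)) (at x)"
  using frechet_derivative_works by auto

lemma Ck_Suc_imp_Ck: "Ck (Suc k) f \<Longrightarrow> Ck k f"
proof (induction k arbitrary: f)
  case 0
  then show ?case
    by (auto intro!: continuous_at_imp_continuous_on differentiable_imp_continuous_within)
next
  case (Suc k)
  then show ?case by auto
qed

lemma Ck_imp_continuous_on: "Ck k f \<Longrightarrow> continuous_on UNIV f"
  by (cases k) (auto intro!: continuous_at_imp_continuous_on differentiable_imp_continuous_within)

lemma Ck_const: "Ck k (\<lambda>x::'a::euclidean_space. c)"
proof (induction k arbitrary: c)
  case 0 then show ?case by auto
next
  case (Suc k)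
  have "pdiff b (\<lambda>x::'a. c) = (\<lambda>x. 0)" for b
    by (auto simp: pdiff_def)
  then show ?case using Suc[of 0] by simp
qed

lemma Ck_add:
  fixes f g :: "'a::euclidean_space \<Rightarrow> real"
  shows "Ck k f \<Longrightarrow> Ck k g \<Longrightarrow> Ck k (\<lambda>x. f x + g x)"
proof (induction k arbitrary: f g)
  case 0 then show ?case by (auto intro: continuous_on_add)
next
  case (Suc k)
  have "pdiff b (\<lambda>x. f x + g x) = (\<lambda>x. pdiff b f x + pdiff b g x)" for b
  proof
    fix x
    show "pdiff b (\<lambda>x. f x + g x) x = pdiff b f x + pdiff b g x"
      using has_derivative_imp_pdiff[OF has_derivative_add[OF Ck_Suc_has_derivative[OF Suc.prems(1)]
          Ck_Suc_has_derivative[OF Suc.prems(2)]]]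
      by (simp add: pdiff_def)
  qed
  then show ?case using Suc by (auto intro: differentiable_add)
qed

lemma Ck_uminus:
  fixes f :: "'a::euclidean_space \<Rightarrow> real"
  shows "Ck k f \<Longrightarrow> Ck k (\<lambda>x. - f x)"
proof (induction k arbitrary: f)
  case 0 then show ?case by (auto intro: continuous_on_minus)
next
  case (Suc k)
  have "pdiff b (\<lambda>x. - f x) = (\<lambda>x. - pdiff b f x)" for b
  proof
    fix x
    show "pdiff b (\<lambda>x. - f x) x = - pdiff b f x"
      using has_derivative_imp_pdiff[OF has_derivative_minus[OF Ck_Suc_has_derivative[OF Suc.prems]]]
      by (simp add: pdiff_def)
  qed
  then show ?case using Suc by (auto intro: differentiable_minus)
qed

lemma Ck_diff:
  fixes f g :: "'a::euclidean_space \<Rightarrow> real"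
  shows "Ck k f \<Longrightarrow> Ck k g \<Longrightarrow> Ck k (\<lambda>x. f x - g x)"
  using Ck_add[of k f "\<lambda>x. - g x"] Ck_uminus[of k g] by simp

lemma Ck_mult:
  fixes f g :: "'a::euclidean_space \<Rightarrow> real"
  shows "Ck k f \<Longrightarrow> Ck k g \<Longrightarrow> Ck k (\<lambda>x. f x * g x)"
proof (induction k arbitrary: f g)
  case 0 then show ?case by (auto intro: continuous_on_mult)
next
  case (Suc k)
  have "pdiff b (\<lambda>x. f x * g x) = (\<lambda>x. pdiff b f x * g x + f x * pdiff b g x)" for b
  proof
    fix x
    show "pdiff b (\<lambda>x. f x * g x) x = pdiff b f x * g x + f x * pdiff b g x"
      using has_derivative_imp_pdiff[OF has_derivative_mult[OF Ck_Suc_has_derivative[OF Suc.prems(1)]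
          Ck_Suc_has_derivative[OF Suc.prems(2)]]]
      by (simp add: pdiff_def)
  qed
  moreover have "Ck k f" "Ck k g" using Suc.prems Ck_Suc_imp_Ck by blast+
  ultimately show ?case using Suc by (auto intro!: Ck_add differentiable_mult)
qed

lemma Ck_sum: "finite I \<Longrightarrow> (\<And>i. i \<in> I \<Longrightarrow> Ck k (f i)) \<Longrightarrow> Ck k (\<lambda>x. \<Sum>i\<in>I. f i x)"
proof (induction I rule: finite_induct)
  case empty then show ?case using Ck_const by simp
next
  case (insert i I) then show ?case by (simp add: Ck_add)
qed

lemma Ck_bounded_linear:
  fixes f :: "'a::euclidean_space \<Rightarrow> real"
  shows "bounded_linear f \<Longrightarrow> Ck k f"
proof (induction k)
  case 0 then show ?case by (simp add: linear_continuous_on)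
next
  case (Suc k)
  have "pdiff b f = (\<lambda>x. f b)" for b
    using Suc.prems by (auto simp: has_derivative_imp_pdiff bounded_linear_imp_has_derivative)
  then show ?case using Suc Ck_const
    by (auto simp: bounded_linear_imp_differentiable)
qed

lemma Ck_component:
  fixes l :: "'a::euclidean_space \<Rightarrow> real^'d"
  shows "bounded_linear l \<Longrightarrow> Ck k (\<lambda>w. l w $ i)"
  by (intro Ck_bounded_linear bounded_linear_compose[OF bounded_linear_vec_nth])

fun real_Ck :: "nat \<Rightarrow> (real \<Rightarrow> real) \<Rightarrow> bool" where
  "real_Ck 0 h = continuous_on UNIV h"
| "real_Ck (Suc k) h = (\<exists>h'. (\<forall>x. (h has_real_derivative h' x) (at x)) \<and> real_Ck k h')"

lemma Ck_compose:
  fixes f :: "'a::euclidean_space \<Rightarrow> real"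
  shows "real_Ck k h \<Longrightarrow> Ck k f \<Longrightarrow> Ck k (\<lambda>x. h (f x))"
proof (induction k arbitrary: h f)
  case 0 then show ?case
    by (auto intro: continuous_on_compose2[of UNIV h UNIV f])
next
  case (Suc k)
  obtain h' where h': "\<And>x. (h has_real_derivative h' x) (at x)" "real_Ck k h'"
    using Suc.prems by auto
  have D: "((\<lambda>x. h (f x)) has_derivative (\<lambda>v. h' (f x) * frechet_derivative f (at x) v)) (at x)" for x
  proof -
    have "((h \<circ> f) has_derivative ((\<lambda>y. h' (f x) * y) \<circ> frechet_derivative f (at x))) (at x)"
      using Ck_Suc_has_derivative[OF Suc.prems(2)] h'(1)[of "f x", unfolded has_field_derivative_def]
      by (intro diff_chain_at) auto
    then show ?thesis by (simp add: o_def)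
  qed
  have "pdiff b (\<lambda>x. h (f x)) = (\<lambda>x. h' (f x) * pdiff b f x)" for b
    using has_derivative_imp_pdiff[OF D] by (simp add: fun_eq_iff pdiff_def)
  moreover have "Ck k f" using Suc.prems Ck_Suc_imp_Ck by blast
  moreover have "(\<lambda>x. h (f x)) differentiable (at x)" for x
    using D[of x] by (auto simp: differentiable_def)
  ultimately show ?case using Suc.IH[of h' f] Suc.prems h'
    by (auto intro!: Ck_mult)
qed

lemma real_Ck_sin_shift: "real_Ck k (\<lambda>x. sin (x + c))"
proof (induction k arbitrary: c)
  case 0 then show ?case by (auto intro!: continuous_intros)
next
  case (Suc k)
  have "((\<lambda>x. sin (x + c)) has_real_derivative sin (x + (c + pi/2))) (at x)" for x
    by (auto intro!: derivative_eq_intros simp: sin_add cos_add)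
  then show ?case using Suc[of "c + pi/2"] by (auto intro!: exI[of _ "\<lambda>x. sin (x + (c + pi/2))"])
qed

lemma real_Ck_sin: "real_Ck k sin"
  using real_Ck_sin_shift[of k 0] by simp

lemma real_Ck_cos: "real_Ck k cos"
  using real_Ck_sin_shift[of k "pi/2"] by (simp add: sin_add)

lemma real_Ck_exp: "real_Ck k exp"
proof (induction k)
  case 0 then show ?case by (auto intro!: continuous_intros)
next
  case (Suc k)
  then show ?case by (auto intro!: exI[of _ exp] DERIV_exp)
qed

section \<open>A periodic well vanishing on the lattice\<close>

definition sin2sum :: "real^'d \<Rightarrow> real" where
  "sin2sum z = (\<Sum>i\<in>UNIV. sin (pi * z$i)^2)"

definition sin2sum_grad :: "real^'d \<Rightarrow> real^'d" where
  "sin2sum_grad z = (\<chi> i. pi * sin (2 * pi * z$i))"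

text \<open>The Hessian of \<^const>\<open>sin2sum\<close> is diagonal; this is its diagonal.\<close>

definition sin2sum_hess :: "real^'d \<Rightarrow> real^'d" where
  "sin2sum_hess z = (\<chi> i. 2 * pi^2 * cos (2 * pi * z$i))"

lemma has_derivative_sin2sum:
  fixes z :: "real^'d"
  shows "(sin2sum has_derivative (\<lambda>h. sin2sum_grad z \<bullet> h)) (at z)"
proof -
  have "((\<lambda>z::real^'d. sin (pi * z$i)^2) has_derivative (\<lambda>h. pi * sin (2 * pi * z$i) * h$i)) (at z)" for i
  proof -
    have "sin (2 * pi * z$i) = 2 * sin (pi * z$i) * cos (pi * z$i)"
      using sin_double[of "pi * z$i"] by (simp add: mult.assoc)
    then show ?thesis
      by (auto intro!: derivative_eq_intros bounded_linear_imp_has_derivative bounded_linear_vec_nth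
          simp: fun_eq_iff algebra_simps)
  qed
  then have "((\<lambda>z. \<Sum>i\<in>UNIV. sin (pi * z$i)^2) has_derivative (\<lambda>h. \<Sum>i\<in>UNIV. pi * sin (2 * pi * z$i) * h$i)) (at z)"
    by (rule has_derivative_sum)
  then show ?thesis unfolding sin2sum_def[abs_def] sin2sum_grad_def inner_vec_def by simp
qed

lemma has_derivative_sin2sum_grad:
  "((\<lambda>z::real^'d. sin2sum_grad z $ j) has_derivative (\<lambda>h. sin2sum_hess z $ j * h$j)) (at z)"
  unfolding sin2sum_grad_def sin2sum_hess_def
  by (auto intro!: derivative_eq_intros bounded_linear_imp_has_derivative bounded_linear_vec_nth
      simp: fun_eq_iff algebra_simps power2_eq_square)

lemma Ck_sin2sum_linear:
  fixes l :: "'a::euclidean_space \<Rightarrow> real^'d"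
  assumes "bounded_linear l"
  shows "Ck k (\<lambda>w. sin2sum (l w))"
proof -
  have "Ck k (\<lambda>w. \<Sum>i\<in>UNIV. sin (pi * l w $ i) * sin (pi * l w $ i))"
    by (intro Ck_sum Ck_mult Ck_const Ck_compose[OF real_Ck_sin] Ck_component bounded_linear_intros assms) auto
  then show ?thesis unfolding sin2sum_def power2_eq_square .
qed

lemma sin_sq_add_integer:
  assumes "m \<in> \<int>"
  shows "sin (pi * (x + m))^2 = sin (pi * x)^2"
proof -
  have s: "sin (pi * m) = 0" using assms sin_times_pi_eq_0[of m] by (simp add: mult.commute)
  have c: "cos (pi * m)^2 = 1" using s sin_cos_squared_add[of "pi * m"] by simp
  have "sin (pi * (x + m)) = sin (pi * x) * cos (pi * m)"
    by (simp add: distrib_left sin_add s)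
  then show ?thesis using c by (simp add: power_mult_distrib)
qed

lemma sin2sum_add_integer:
  assumes "\<forall>i. n$i \<in> \<int>"
  shows "sin2sum (w + n) = sin2sum w"
  unfolding sin2sum_def using sin_sq_add_integer[of "n$_" "w$_"] assms by simp

lemma sin2sum_integer: "\<forall>i. n$i \<in> \<int> \<Longrightarrow> sin2sum n = 0"
  using sin2sum_add_integer[of n 0] by (simp add: sin2sum_def)

lemma sin2sum_ge_summand: "sin (pi * z$i)^2 \<le> sin2sum z"
  unfolding sin2sum_def by (rule member_le_sum) auto

lemma sin2sum_cube_face:
  assumes "\<forall>i. n$i \<in> \<int>" and "\<bar>z$i - n$i\<bar> = 1/4"
  shows "1/2 \<le> sin2sum z"
proof -
  have "sin (pi * z$i)^2 = sin (pi * (z$i - n$i))^2"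
    using sin_sq_add_integer[of "n$i" "z$i - n$i"] assms(1) by simp
  also have "\<dots> = sin (pi/4)^2"
  proof -
    have "z$i - n$i = 1/4 \<or> z$i - n$i = - (1/4)"
      using assms(2) by linarith
    then have "pi * (z$i - n$i) = pi/4 \<or> pi * (z$i - n$i) = - (pi/4)"
      by auto
    then show ?thesis by (elim disjE) (simp_all only: sin_minus power2_minus)
  qed
  also have "\<dots> = 1/2" by (simp add: sin_45 power_divide)
  finally show ?thesis using sin2sum_ge_summand[of z i] by simp
qed

lemma sin2sum_cube_boundary:
  fixes n y :: "real^'d"
  assumes eps: "0 < eps" and n: "\<forall>i. n$i \<in> \<int>"
    and "y \<in> cbox (\<chi> i. eps * n$i - eps/4) (\<chi> i. eps * n$i + eps/4)"
    and "y \<notin> box (\<chi> i. eps * n$i - eps/4) (\<chi> i. eps * n$i + eps/4)"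
  shows "1/2 \<le> sin2sum ((1/eps) *\<^sub>R y)"
proof -
  obtain i where "y$i = eps * n$i - eps/4 \<or> y$i = eps * n$i + eps/4"
    using assms(3,4) unfolding mem_box_cart by (auto simp: not_less) (meson order.antisym)+
  then have "\<bar>y$i - eps * n$i\<bar> = eps/4" using eps by auto
  moreover have "((1/eps) *\<^sub>R y)$i - n$i = (y$i - eps * n$i) / eps" using eps by (simp add: field_simps)
  ultimately have "\<bar>((1/eps) *\<^sub>R y)$i - n$i\<bar> = 1/4" using eps by simp
  then show ?thesis by (rule sin2sum_cube_face[OF n])
qed

lemma sin2sum_grad_neq_0:
  assumes "0 < sin2sum z" "sin2sum z < 1/2"
  shows "sin2sum_grad z \<noteq> 0"
proof
  assume v0: "sin2sum_grad z = 0"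
  have t: "sin (pi * z$i)^2 = 0 \<or> sin (pi * z$i)^2 = 1" for i
  proof -
    have "sin (2 * (pi * z$i)) = 0"
      using v0 unfolding sin2sum_grad_def by (metis vec_lambda_beta zero_index mult.assoc mult_eq_0_iff pi_neq_zero)
    then have "sin (pi * z$i) = 0 \<or> cos (pi * z$i) = 0" by (simp add: sin_double)
    moreover have "cos (pi * z$i) = 0 \<Longrightarrow> sin (pi * z$i)^2 = 1"
      using sin_cos_squared_add[of "pi * z$i"] by simp
    ultimately show ?thesis by auto
  qed
  show False
  proof (cases "\<exists>i. sin (pi * z$i)^2 = 1")
    case True
    then obtain i where "sin (pi * z$i)^2 = 1" by blast
    then show False using sin2sum_ge_summand[of z i] assms by simp
  next
    case False
    then have "sin2sum z = 0" unfolding sin2sum_def using t by (simp add: sum.neutral)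
    then show False using assms by simp
  qed
qed

lemma abs_sin2sum_grad_le: "\<bar>sin2sum_grad z $ i\<bar> \<le> pi"
  unfolding sin2sum_grad_def by (simp add: abs_mult)

lemma abs_sin2sum_hess_le: "\<bar>sin2sum_hess z $ i\<bar> \<le> 2 * pi^2"
  unfolding sin2sum_hess_def by (simp add: abs_mult)

lemma sin2sum_grad_inner_self_ge: "4 * pi^2 * sin2sum z * (1 - sin2sum z) \<le> sin2sum_grad z \<bullet> sin2sum_grad z"
proof -
  let ?s = "\<lambda>i. sin (pi * z$i)^2"
  have "sin2sum_grad z $ i * sin2sum_grad z $ i = 4 * pi^2 * (?s i * (1 - ?s i))" for i
  proof -
    have "sin (2 * pi * z$i) = 2 * sin (pi * z$i) * cos (pi * z$i)"
      using sin_double[of "pi * z$i"] by (simp add: mult.assoc)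
    then have "sin2sum_grad z $ i * sin2sum_grad z $ i = pi^2 * (4 * (sin (pi * z$i)^2 * cos (pi * z$i)^2))"
      unfolding sin2sum_grad_def by (simp add: power2_eq_square algebra_simps)
    then show ?thesis by (simp add: cos_squared_eq)
  qed
  then have "sin2sum_grad z \<bullet> sin2sum_grad z = (\<Sum>i\<in>UNIV. 4 * pi^2 * (?s i * (1 - ?s i)))"
    unfolding inner_vec_def by simp
  moreover have "(\<Sum>i\<in>UNIV. 4 * pi^2 * (?s i * (1 - sin2sum z))) \<le> (\<Sum>i\<in>UNIV. 4 * pi^2 * (?s i * (1 - ?s i)))"
    using sin2sum_ge_summand[of z] by (intro sum_mono mult_left_mono) auto
  moreover have "(\<Sum>i\<in>UNIV. 4 * pi^2 * (?s i * (1 - sin2sum z))) = 4 * pi^2 * sin2sum z * (1 - sin2sum z)"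
    unfolding sin2sum_def by (simp add: sum_distrib_left sum_distrib_right mult.assoc)
  ultimately show ?thesis by simp
qed

lemma sin2sum_grad_inner_self_ge_2:
  assumes "1/8 \<le> sin2sum z" "sin2sum z \<le> 3/8"
  shows "2 \<le> sin2sum_grad z \<bullet> sin2sum_grad z"
proof -
  have "(sin2sum z - 1/8) * (7/8 - sin2sum z) \<ge> 0" using assms by (intro mult_nonneg_nonneg) auto
  then have "7/64 \<le> sin2sum z * (1 - sin2sum z)" by (simp add: field_simps)
  moreover have "9 \<le> pi^2" using power_mono[of 3 pi 2] pi_gt3 by simp
  ultimately have "4 * 9 * (7/64) \<le> 4 * pi^2 * (sin2sum z * (1 - sin2sum z))"
    by (intro mult_mono) auto
  then have "4 * 9 * (7/64) \<le> 4 * pi^2 * sin2sum z * (1 - sin2sum z)" by (simp only: mult.assoc)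
  then show ?thesis using sin2sum_grad_inner_self_ge[of z] by linarith
qed

section \<open>The barrier\<close>

lemma DERIV_mult_abs: "((\<lambda>x::real. x * \<bar>x\<bar>) has_real_derivative 2 * \<bar>x\<bar>) (at x)"
proof -
  consider "x > 0" | "x < 0" | "x = 0" by linarith
  then show ?thesis
  proof cases
    case 1
    have "((\<lambda>x::real. x * x) has_real_derivative 2 * \<bar>x\<bar>) (at x)"
      using 1 by (auto intro!: derivative_eq_intros)
    then show ?thesis
      by (rule has_field_derivative_transform_within_open[where S="{0<..}"]) (use 1 in auto)
  next
    case 2
    have "((\<lambda>x::real. - (x * x)) has_real_derivative 2 * \<bar>x\<bar>) (at x)"
      using 2 by (auto intro!: derivative_eq_intros)
    then show ?thesis
      by (rule has_field_derivative_transform_within_open[where S="{..<0}"]) (use 2 in auto)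
  next
    case 3
    have "((\<lambda>y::real. \<bar>y\<bar>) \<longlongrightarrow> 0) (at 0)"
      using tendsto_rabs[OF tendsto_ident_at[of 0 UNIV]] by simp
    moreover have "\<forall>\<^sub>F y in at (0::real). \<bar>y\<bar> = (y * \<bar>y\<bar> - 0 * \<bar>0\<bar>) / (y - 0)"
      by (auto simp: eventually_at_filter)
    ultimately have "((\<lambda>y::real. (y * \<bar>y\<bar> - 0 * \<bar>0\<bar>) / (y - 0)) \<longlongrightarrow> 0) (at 0)"
      using tendsto_cong by fastforce
    then show ?thesis using 3 by (simp add: has_field_derivative_iff)
  qed
qed

definition ramp3 :: "real \<Rightarrow> real" where "ramp3 x = (max 0 x) ^ 3"

text \<open>\<^const>\<open>ramp3\<close> is \<open>C\<^sup>2\<close>, as test functions must be, but not \<open>C\<^sup>3\<close>; writing it with \<open>x \<bar>x\<bar>\<close>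
  lets the usual derivative rules compute its first two derivatives.\<close>

lemma ramp3_eq_abs: "ramp3 x = (x^3 + x * (x * \<bar>x\<bar>)) / 2"
  by (auto simp: ramp3_def max_def power3_eq_cube)

lemma DERIV_ramp3: "(ramp3 has_real_derivative 3 * (max 0 x)^2) (at x)"
proof -
  have "((\<lambda>x. (x^3 + x * (x * \<bar>x\<bar>)) / 2) has_real_derivative 3 * (max 0 x)^2) (at x)"
    by (rule DERIV_mult_abs derivative_eq_intros refl)+
      (auto simp: max_def field_simps power2_eq_square eval_nat_numeral)
  then show ?thesis unfolding ramp3_eq_abs[abs_def] .
qed

lemma DERIV_ramp2: "((\<lambda>x. 3 * (max 0 x)^2) has_real_derivative 6 * max 0 x) (at x)"
proof -
  have "((\<lambda>x. 3 * (x^2 + x * \<bar>x\<bar>) / 2) has_real_derivative 6 * max 0 x) (at x)"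
    by (rule DERIV_mult_abs derivative_eq_intros refl)+
      (auto simp: max_def field_simps power2_eq_square)
  moreover have "3 * (x^2 + x * \<bar>x\<bar>) / 2 = 3 * (max 0 x)^2" for x :: real
    by (auto simp: max_def power2_eq_square)
  ultimately show ?thesis by simp
qed

lemma real_Ck_ramp3: "real_Ck 2 (\<lambda>s. c - C * ramp3 (s - s1))"
proof -
  have shift: "((\<lambda>x. x - s1) has_real_derivative 1) (at x)" for x
    by (auto intro!: derivative_eq_intros)
  have "((\<lambda>s. c - C * ramp3 (s - s1)) has_real_derivative - C * (3 * (max 0 (x - s1))^2)) (at x)" for x
    using DERIV_chain2[OF DERIV_ramp3 shift] by (auto intro!: derivative_eq_intros)
  moreover have "((\<lambda>x. - C * (3 * (max 0 (x - s1))^2)) has_real_derivative - C * (6 * max 0 (x - s1))) (at x)" for x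
    using DERIV_cmult[OF DERIV_chain2[OF DERIV_ramp2 shift], of "- C"] by simp
  moreover have "continuous_on UNIV (\<lambda>x. - C * (6 * max 0 (x - s1)))"
    by (auto intro!: continuous_intros)
  ultimately show ?thesis
    unfolding numeral_2_eq_2 real_Ck.simps
    by (intro exI conjI allI) assumption+
qed

lemma ramp3_eq_0: "x \<le> 0 \<Longrightarrow> ramp3 x = 0"
  by (simp add: ramp3_def)

lemma ramp3_nonneg: "0 \<le> ramp3 x"
  by (simp add: ramp3_def)

lemma ramp3_mono: "x \<le> y \<Longrightarrow> ramp3 x \<le> ramp3 y"
  by (simp add: ramp3_def power_mono)

definition barrier :: "real \<Rightarrow> real \<Rightarrow> real \<Rightarrow> real \<Rightarrow> real \<Rightarrow> real \<Rightarrow> (real^'d) \<times> real \<Rightarrow> real" where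
  "barrier eps c C s1 \<eta> L w = c - C * ramp3 (sin2sum ((1/eps) *\<^sub>R fst w) - s1) - \<eta> * exp (L * snd w)"

lemma has_derivative_sin2sum_scaled:
  "((\<lambda>w::(real^'d) \<times> real. sin2sum ((1/eps) *\<^sub>R fst w) - s1) has_derivative
     (\<lambda>hk. sin2sum_grad ((1/eps) *\<^sub>R fst w) \<bullet> ((1/eps) *\<^sub>R fst hk))) (at w)"
proof -
  have "((\<lambda>w::(real^'d) \<times> real. (1/eps) *\<^sub>R fst w) has_derivative (\<lambda>hk. (1/eps) *\<^sub>R fst hk)) (at w)"
    by (intro bounded_linear_imp_has_derivative bounded_linear_intros)
  from has_derivative_diff[OF has_derivative_compose[OF this has_derivative_sin2sum] has_derivative_const]
  show ?thesis by simp
qed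

lemma has_derivative_barrier:
  fixes w :: "(real^'d) \<times> real"
  shows "(barrier eps c C s1 \<eta> L has_derivative
     (\<lambda>hk. - C * (3 * (max 0 (sin2sum ((1/eps) *\<^sub>R fst w) - s1))^2)
             * (sin2sum_grad ((1/eps) *\<^sub>R fst w) \<bullet> ((1/eps) *\<^sub>R fst hk))
           - \<eta> * (exp (L * snd w) * (L * snd hk)))) (at w)"
  unfolding barrier_def[abs_def]
  by (rule derivative_eq_intros has_derivative_compose[OF has_derivative_sin2sum_scaled DERIV_ramp3[unfolded has_field_derivative_def]] refl)+
    (auto simp: fun_eq_iff algebra_simps)

lemma Dt_barrier: "Dt (barrier eps c C s1 \<eta> L) (y, s) = - \<eta> * L * exp (L * s)"
  unfolding Dt_def by (subst frechet_derivative_at[OF has_derivative_barrier, symmetric]) simp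

lemma Dx_barrier:
  "Dx (barrier eps c C s1 \<eta> L) (y, s) =
     (- 3 * C * (max 0 (sin2sum ((1/eps) *\<^sub>R y) - s1))^2 / eps) *\<^sub>R sin2sum_grad ((1/eps) *\<^sub>R y)"
  unfolding Dx_def
  by (subst frechet_derivative_at[OF has_derivative_barrier, symmetric]) (simp add: vec_eq_iff inner_axis)

lemma Dxx_barrier:
  fixes y :: "real^'d" and eps :: real
  defines "z \<equiv> (1/eps) *\<^sub>R y"
  shows "Dxx (barrier eps c C s1 \<eta> L) (y, s) =
    (\<chi> i j. (- 6 * C * max 0 (sin2sum z - s1)) / eps^2 * sin2sum_grad z $ i * sin2sum_grad z $ j
        + (if i = j then (- 3 * C * (max 0 (sin2sum z - s1))^2) / eps^2 * sin2sum_hess z $ j else 0))"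
proof -
  let ?z = "\<lambda>w::(real^'d) \<times> real. (1/eps) *\<^sub>R fst w"
  have partial: "(\<lambda>w. frechet_derivative (barrier eps c C s1 \<eta> L) (at w) (axis j 1, 0)) =
      (\<lambda>w. - C * (3 * (max 0 (sin2sum (?z w) - s1))^2 * (sin2sum_grad (?z w) $ j / eps)))" for j
    by (rule ext, subst frechet_derivative_at[OF has_derivative_barrier, symmetric]) (simp add: inner_axis mult.assoc)
  have ramp2: "((\<lambda>w::(real^'d) \<times> real. 3 * (max 0 (sin2sum (?z w) - s1))^2) has_derivative
      (\<lambda>hk. 6 * max 0 (sin2sum (?z w) - s1) * (sin2sum_grad (?z w) \<bullet> ((1/eps) *\<^sub>R fst hk)))) (at w)" for w
    using has_derivative_compose[OF has_derivative_sin2sum_scaled DERIV_ramp2[unfolded has_field_derivative_def]]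
    by simp
  have grad: "((\<lambda>w::(real^'d) \<times> real. sin2sum_grad (?z w) $ j / eps) has_derivative
      (\<lambda>hk. sin2sum_hess (?z w) $ j * ((1/eps) *\<^sub>R fst hk) $ j / eps)) (at w)" for w j
  proof -
    have "((\<lambda>w::(real^'d) \<times> real. ?z w) has_derivative (\<lambda>hk. (1/eps) *\<^sub>R fst hk)) (at w)"
      by (intro bounded_linear_imp_has_derivative bounded_linear_intros)
    from has_derivative_mult_right[OF has_derivative_compose[OF this has_derivative_sin2sum_grad], of "1/eps"]
    show ?thesis by simp
  qed
  have axis_comp: "axis i (1::real) $ j = (if j = i then 1 else 0)" for i j :: 'd
    by (simp add: axis_def)
  show ?thesis
    unfolding Dxx_def partial z_def
    by (subst frechet_derivative_at[OF has_derivative_mult_right[OF has_derivative_mult[OF ramp2 grad]], symmetric])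
      (auto simp: vec_eq_iff inner_axis axis_comp power2_eq_square algebra_simps)
qed

lemma Ck2_barrier: "Ck 2 (barrier eps c C s1 \<eta> L :: (real^'d) \<times> real \<Rightarrow> real)"
proof -
  have "Ck 2 (\<lambda>w::(real^'d) \<times> real. (\<lambda>s. c - C * ramp3 (s - s1)) (sin2sum ((1/eps) *\<^sub>R fst w))
                                     + - \<eta> * exp (L * snd w))"
    by (intro Ck_add Ck_compose[OF real_Ck_ramp3] Ck_sin2sum_linear Ck_mult Ck_const
        Ck_compose[OF real_Ck_exp] Ck_bounded_linear bounded_linear_intros)
  then show ?thesis unfolding barrier_def[abs_def] by simp
qed

lemma geoG_uminus: "geoG a eps x (- p) (- X) = - geoG a eps x p X"
proof -
  let ?n = "p /\<^sub>R norm p"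
  have "(\<Sum>i\<in>UNIV. \<Sum>j\<in>UNIV. ((if i = j then 1 else 0) - ((- p) /\<^sub>R norm (- p)) $ i * ((- p) /\<^sub>R norm (- p)) $ j) * (- X) $ j $ i)
      = - (\<Sum>i\<in>UNIV. \<Sum>j\<in>UNIV. ((if i = j then 1 else 0) - ?n $ i * ?n $ j) * X $ j $ i)"
    by (simp add: sum_negf)
  then show ?thesis
    unfolding geoG_def by (simp add: inner_minus_right)
qed

definition flip_sign :: "(real^'d) \<times> (real^'d) \<times> (real^'d^'d) \<Rightarrow> (real^'d) \<times> (real^'d) \<times> (real^'d^'d)" where
  "flip_sign w = (fst w, - fst (snd w), - snd (snd w))"

lemma at_flip_sign:
  "filtermap flip_sign (at (x, p, X) within {w. fst (snd w) \<noteq> 0}) = at (x, - p, - X) within {w. fst (snd w) \<noteq> 0}"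
proof -
  have inv: "flip_sign (flip_sign w) = w" for w by (simp add: flip_sign_def)
  then have img: "flip_sign ` A = flip_sign -` A" for A by (auto simp: inv) (metis inv image_eqI)
  have lin: "bounded_linear flip_sign" unfolding flip_sign_def
    by (intro bounded_linear_intros bounded_linear_minus)
  have bij: "bij flip_sign" by (metis inv bij_betw_byWitness[of UNIV flip_sign flip_sign UNIV] subset_UNIV)
  have "open (flip_sign ` S)" if "open S" for S
    unfolding img using continuous_open_vimage[OF that linear_continuous_at[OF lin]] .
  from filtermap_linear_at_within[OF bij linear_continuous_at[OF lin] this,
      where a = "(x, p, X)" and S = "{w. fst (snd w) \<noteq> 0}"]
  show ?thesis
    by (simp add: img) (simp add: flip_sign_def vimage_def)
qed

lemma Gupper_uminus: "Gupper a eps x (- p) (- X) = - Glower a eps x p X"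
proof -
  let ?F = "at (x, p, X) within {w. fst (snd w) \<noteq> 0}"
  let ?g = "\<lambda>(y, q, Y). ereal (geoG a eps y q Y)"
  have "inj flip_sign" by (rule injI) (auto simp: flip_sign_def prod_eq_iff)
  then have "Gupper a eps x (- p) (- X) = Limsup ?F (\<lambda>w. ?g (flip_sign w))"
    unfolding Gupper_def at_flip_sign[symmetric] by (rule Limsup_filtermap_eq)
  also have "\<dots> = Limsup ?F (\<lambda>w. - ?g w)"
    by (simp add: flip_sign_def case_prod_unfold geoG_uminus)
  finally show ?thesis
    unfolding Glower_def ereal_Limsup_uminus .
qed

lemma frechet_derivative_uminus:
  fixes f :: "'a::real_normed_vector \<Rightarrow> real"
  assumes "f differentiable (at x)"
  shows "frechet_derivative (\<lambda>w. - f w) (at x) = (\<lambda>h. - frechet_derivative f (at x) h)"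
  using frechet_derivative_at[OF has_derivative_minus[OF frechet_derivative_works[THEN iffD1, OF assms]]]
  by simp

lemma Ck2_partial_differentiable:
  fixes \<phi> :: "'a::euclidean_space \<Rightarrow> real"
  assumes "Ck 2 \<phi>" "b \<in> Basis"
  shows "(\<lambda>w. frechet_derivative \<phi> (at w) b) differentiable (at z)"
proof -
  have "pdiff b \<phi> = (\<lambda>w. frechet_derivative \<phi> (at w) b)" by (simp add: fun_eq_iff pdiff_def)
  then show ?thesis using assms unfolding numeral_2_eq_2 Ck.simps by metis
qed

lemma test_derivatives_uminus:
  fixes \<phi> :: "(real^'d) \<times> real \<Rightarrow> real"
  assumes "Ck 2 \<phi>"
  shows "Dt (\<lambda>w. - \<phi> w) z = - Dt \<phi> z" and "Dx (\<lambda>w. - \<phi> w) z = - Dx \<phi> z"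
    and "Dxx (\<lambda>w. - \<phi> w) z = - Dxx \<phi> z"
proof -
  have d: "\<phi> differentiable (at w)" for w using assms by (cases w) (simp add: numeral_2_eq_2)
  show "Dt (\<lambda>w. - \<phi> w) z = - Dt \<phi> z" unfolding Dt_def frechet_derivative_uminus[OF d] ..
  show "Dx (\<lambda>w. - \<phi> w) z = - Dx \<phi> z" by (simp add: Dx_def frechet_derivative_uminus[OF d] vec_eq_iff)
  have "(axis j 1, 0) \<in> (Basis :: ((real^'d) \<times> real) set)" for j
    by (auto simp: Basis_prod_def Basis_vec_def)
  note dd = Ck2_partial_differentiable[OF assms this]
  show "Dxx (\<lambda>w. - \<phi> w) z = - Dxx \<phi> z"
    by (simp add: Dxx_def frechet_derivative_uminus[OF d] frechet_derivative_uminus[OF dd] vec_eq_iff)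
qed

lemma visc_super_uminus:
  assumes "visc_sub a eps v"
  shows "visc_super a eps (\<lambda>x t. - v x t)"
  unfolding visc_super_def
proof (intro allI impI)
  fix \<phi> x t
  assume "Ck 2 \<phi> \<and> 0 < t \<and> (\<forall>\<^sub>F w in at (x, t). - v (fst w) (snd w) - \<phi> w \<ge> - v x t - \<phi> (x, t))"
  then have \<phi>: "Ck 2 \<phi>" "0 < t" and min: "\<forall>\<^sub>F w in at (x, t). - v (fst w) (snd w) - \<phi> w \<ge> - v x t - \<phi> (x, t)"
    by auto
  have "\<forall>\<^sub>F w in at (x, t). v (fst w) (snd w) - - \<phi> w \<le> v x t - - \<phi> (x, t)"
    using min by (rule eventually_mono) simp
  then have "ereal (Dt (\<lambda>w. - \<phi> w) (x, t)) \<le> Gupper a eps x (Dx (\<lambda>w. - \<phi> w) (x, t)) (Dxx (\<lambda>w. - \<phi> w) (x, t))"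
    using assms Ck_uminus[OF \<phi>(1)] \<phi>(2) unfolding visc_sub_def by blast
  then have "- ereal (Dt \<phi> (x, t)) \<le> - Glower a eps x (Dx \<phi> (x, t)) (Dxx \<phi> (x, t))"
    by (simp add: test_derivatives_uminus[OF \<phi>(1)] Gupper_uminus)
  then show "Glower a eps x (Dx \<phi> (x, t)) (Dxx \<phi> (x, t)) \<le> ereal (Dt \<phi> (x, t))"
    by (simp only: ereal_minus_le_minus)
qed

lemma abs_geoG_le:
  "\<bar>geoG a eps y q Y\<bar> \<le> \<bar>a ((1/eps) *\<^sub>R y)\<bar> * (\<Sum>i\<in>UNIV. \<Sum>j\<in>UNIV. 2 * \<bar>Y $ j $ i\<bar>)
     + \<bar>1/eps\<bar> * \<bar>grad a ((1/eps) *\<^sub>R y) \<bullet> q\<bar>"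
proof -
  let ?n = "q /\<^sub>R norm q"
  have unit: "\<bar>?n $ i\<bar> \<le> 1" for i
    using component_le_norm_cart[of ?n i] by (cases "q = 0") auto
  have coeff: "\<bar>(if i = j then 1 else 0) - ?n $ i * ?n $ j\<bar> \<le> 2" for i j
  proof -
    have "\<bar>?n $ i * ?n $ j\<bar> \<le> 1" using unit[of i] unit[of j] by (simp add: abs_mult mult_le_one)
    moreover have "\<bar>c - x\<bar> \<le> 2" if "c = 0 \<or> c = 1" "\<bar>x\<bar> \<le> 1" for c x :: real
      using that by (auto simp: abs_le_iff)
    ultimately show ?thesis by simp
  qed
  have "\<bar>\<Sum>i\<in>UNIV. \<Sum>j\<in>UNIV. ((if i = j then 1 else 0) - ?n $ i * ?n $ j) * Y $ j $ i\<bar>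
        \<le> (\<Sum>i\<in>UNIV. \<Sum>j\<in>UNIV. \<bar>((if i = j then 1 else 0) - ?n $ i * ?n $ j) * Y $ j $ i\<bar>)"
    by (rule order_trans[OF sum_abs sum_mono[OF sum_abs]])
  also have "\<dots> \<le> (\<Sum>i\<in>UNIV. \<Sum>j\<in>UNIV. 2 * \<bar>Y $ j $ i\<bar>)"
    unfolding abs_mult by (intro sum_mono mult_right_mono coeff) simp
  finally have "\<bar>a ((1/eps) *\<^sub>R y) * (\<Sum>i\<in>UNIV. \<Sum>j\<in>UNIV. ((if i = j then 1 else 0) - ?n $ i * ?n $ j) * Y $ j $ i)\<bar>
     \<le> \<bar>a ((1/eps) *\<^sub>R y)\<bar> * (\<Sum>i\<in>UNIV. \<Sum>j\<in>UNIV. 2 * \<bar>Y $ j $ i\<bar>)"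
    by (simp add: abs_mult mult_left_mono)
  moreover have "\<bar>1/eps * (grad a ((1/eps) *\<^sub>R y) \<bullet> q)\<bar> = \<bar>1/eps\<bar> * \<bar>grad a ((1/eps) *\<^sub>R y) \<bullet> q\<bar>"
    by (simp add: abs_mult)
  ultimately show ?thesis
    unfolding geoG_def by (simp add: order_trans[OF abs_triangle_ineq])
qed

lemma ereal_le_Liminf_tendsto:
  assumes "(f \<longlongrightarrow> c) F"
  shows "ereal c \<le> Liminf F (\<lambda>w. ereal (f w))"
proof (cases "F = bot")
  case False
  then show ?thesis using lim_imp_Liminf[OF False tendsto_ereal[OF assms]] by simp
qed simp

lemma isCont_scaled_fst:
  fixes f :: "'a::real_normed_vector \<Rightarrow> 'b::topological_space"
  assumes "continuous_on UNIV f"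
  shows "isCont (\<lambda>w. f (c *\<^sub>R fst w)) w"
  using assms by (intro isCont_o2[where f = "\<lambda>w. c *\<^sub>R fst w" and g = f] continuous_intros)
    (auto simp: continuous_on_eq_continuous_at)

lemma Glower_ge_geoG:
  assumes a: "continuous_on UNIV a" and Da: "continuous_on UNIV (grad a)" and "p \<noteq> 0"
  shows "ereal (geoG a eps y p X) \<le> Glower a eps y p X"
proof -
  let ?g = "\<lambda>w. geoG a eps (fst w) (fst (snd w)) (snd (snd w))"
  have "isCont ?g (y, p, X)"
    unfolding geoG_def using \<open>p \<noteq> 0\<close> by (intro continuous_intros isCont_scaled_fst a Da) auto
  then have "(?g \<longlongrightarrow> geoG a eps y p X) (at (y, p, X) within {w. fst (snd w) \<noteq> 0})"
    by (auto simp: isCont_def intro: tendsto_within_subset)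
  then show ?thesis
    unfolding Glower_def case_prod_unfold by (rule ereal_le_Liminf_tendsto)
qed

lemma Glower_zero_nonneg:
  assumes a: "continuous_on UNIV a" and Da: "continuous_on UNIV (grad a)"
  shows "0 \<le> Glower a eps y 0 0"
proof -
  let ?g = "\<lambda>w. geoG a eps (fst w) (fst (snd w)) (snd (snd w))"
  let ?B = "\<lambda>w. \<bar>a ((1/eps) *\<^sub>R fst w)\<bar> * (\<Sum>i\<in>UNIV. \<Sum>j\<in>UNIV. 2 * \<bar>snd (snd w) $ j $ i\<bar>)
     + \<bar>1/eps\<bar> * \<bar>grad a ((1/eps) *\<^sub>R fst w) \<bullet> fst (snd w)\<bar>"
  have "isCont ?B (y, 0, 0)" by (intro continuous_intros isCont_scaled_fst a Da)
  then have "(?B \<longlongrightarrow> 0) (at (y, 0, 0) within {w. fst (snd w) \<noteq> 0})"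
    by (auto simp: isCont_def intro: tendsto_within_subset)
  then have "(?g \<longlongrightarrow> 0) (at (y, 0, 0) within {w. fst (snd w) \<noteq> 0})"
    by (rule Lim_null_comparison[rotated]) (simp only: real_norm_def abs_geoG_le eventually_True)
  then show ?thesis
    unfolding Glower_def case_prod_unfold zero_ereal_def by (rule ereal_le_Liminf_tendsto)
qed

section \<open>Pinning\<close>

lemma continuous_on_grad:
  fixes a :: "real^'d \<Rightarrow> real"
  assumes "Ck 2 a"
  shows "continuous_on UNIV (grad a)"
proof -
  have "continuous_on UNIV (pdiff (axis i 1) a)" for i :: 'd
    using assms by (intro Ck_imp_continuous_on[of 1]) (simp add: numeral_2_eq_2)
  then have "continuous_on UNIV (\<lambda>y. \<chi> i. pdiff (axis i 1) a y)"
    by (intro continuous_on_vec_lambda)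
  moreover have "grad a = (\<lambda>y. \<chi> i. pdiff (axis i 1) a y)"
    by (simp add: fun_eq_iff grad_def pdiff_def)
  ultimately show ?thesis by simp
qed

text \<open>The projection \<open>Id - n \<otimes> n\<close> onto the tangent space of the level set kills the radial part
  \<open>A v \<otimes> v\<close> of the Hessian.\<close>

lemma tangential_trace_eq:
  fixes v w n :: "real^'d"
  assumes N: "N = (\<Sum>i\<in>UNIV. v$i * v$i)" and "N \<noteq> 0" and nn: "\<And>i j. n$i * n$j = v$i * v$j / N"
  shows "(\<Sum>i\<in>UNIV. \<Sum>j\<in>UNIV. ((if i = j then 1 else 0) - n$i * n$j) * (A * v$j * v$i + (if j = i then B * w$i else 0)))
       = B * (\<Sum>i\<in>UNIV. (1 - v$i * v$i / N) * w$i)"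
proof -
  have row: "(\<Sum>j\<in>UNIV. ((if i = j then 1 else 0) - n$i * n$j) * (A * v$j * v$i + (if j = i then B * w$i else 0)))
     = A * v$i * v$i + B * w$i - (\<Sum>j\<in>UNIV. (v$i * v$j / N) * (A * v$j * v$i)) - v$i * v$i / N * B * w$i" for i
  proof -
    have "(\<Sum>j\<in>UNIV. ((if i = j then 1 else 0) - n$i * n$j) * (A * v$j * v$i + (if j = i then B * w$i else 0)))
      = (\<Sum>j\<in>UNIV. (if i = j then A * v$j * v$i + B * w$i else 0) - (v$i * v$j / N) * (A * v$j * v$i)
                     - (if j = i then v$i * v$j / N * B * w$i else 0))"
      by (rule sum.cong[OF refl]) (auto simp: nn algebra_simps)
    then show ?thesis by (simp add: sum_subtractf sum.delta)
  qed
  have "(\<Sum>i\<in>UNIV. \<Sum>j\<in>UNIV. (v$i * v$j / N) * (A * v$j * v$i)) = A / N * (N * N)"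
    unfolding N by (simp add: sum_product sum_distrib_left algebra_simps)
  then have quad: "(\<Sum>i\<in>UNIV. \<Sum>j\<in>UNIV. (v$i * v$j / N) * (A * v$j * v$i)) = A * N"
    using \<open>N \<noteq> 0\<close> by simp
  have "(\<Sum>i\<in>UNIV. A * v$i * v$i + B * w$i - (\<Sum>j\<in>UNIV. (v$i * v$j / N) * (A * v$j * v$i)) - v$i * v$i / N * B * w$i)
     = A * N + (\<Sum>i\<in>UNIV. B * w$i) - A * N - (\<Sum>i\<in>UNIV. v$i * v$i / N * B * w$i)"
    using quad N by (simp add: sum_subtractf sum.distrib sum_distrib_left mult.assoc)
  also have "\<dots> = B * (\<Sum>i\<in>UNIV. (1 - v$i * v$i / N) * w$i)"
    by (simp add: sum_distrib_left sum_subtractf algebra_simps)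
  finally show ?thesis unfolding row .
qed

lemma geoG_radial:
  fixes y v w :: "real^'d"
  assumes "v \<noteq> 0" "c \<noteq> 0" "eps > 0"
  shows "geoG a eps y ((c/eps) *\<^sub>R v) (\<chi> i j. c2/eps^2 * v$i * v$j + (if i = j then c/eps^2 * w$j else 0))
    = (c/eps^2) * (a ((1/eps) *\<^sub>R y) * (\<Sum>i\<in>UNIV. (1 - v$i * v$i / (\<Sum>k\<in>UNIV. v$k * v$k)) * w$i)
                   + grad a ((1/eps) *\<^sub>R y) \<bullet> v)"
proof -
  define N where "N = (\<Sum>k\<in>UNIV. v$k * v$k)"
  have nv: "norm v ^ 2 = N" unfolding N_def by (simp add: power2_norm_eq_inner inner_vec_def)
  have N0: "N \<noteq> 0" using assms(1) nv by auto
  define n where "n = ((c/eps) *\<^sub>R v) /\<^sub>R norm ((c/eps) *\<^sub>R v)"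
  define k where "k = (c/eps) / norm ((c/eps) *\<^sub>R v)"
  have nk: "n$i = k * v$i" for i unfolding n_def k_def by (simp add: divide_inverse)
  have "(norm ((c/eps) *\<^sub>R v))^2 = (c/eps)^2 * N"
    using nv by (simp add: power_mult_distrib power_divide)
  then have k2: "k^2 = 1/N" unfolding k_def using assms(2,3) N0 by (simp add: power_divide)
  have nn: "n$i * n$j = v$i * v$j / N" for i j
  proof -
    have "n$i * n$j = k^2 * (v$i * v$j)" by (simp add: nk power2_eq_square algebra_simps)
    then show ?thesis using k2 by simp
  qed
  have "(\<Sum>i\<in>UNIV. \<Sum>j\<in>UNIV. ((if i = j then 1 else 0) - n$i * n$j) * (c2/eps^2 * v$j * v$i + (if j = i then c/eps^2 * w$i else 0)))
       = c/eps^2 * (\<Sum>i\<in>UNIV. (1 - v$i * v$i / N) * w$i)"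
    by (rule tangential_trace_eq[OF N_def N0 nn])
  moreover have "1/eps * (grad a ((1/eps) *\<^sub>R y) \<bullet> ((c/eps) *\<^sub>R v)) = c/eps^2 * (grad a ((1/eps) *\<^sub>R y) \<bullet> v)"
    by (simp add: power2_eq_square)
  ultimately show ?thesis
    unfolding geoG_def n_def[symmetric] N_def[symmetric] by (simp add: algebra_simps)
qed

lemma tangential_sum_le:
  fixes v w :: "real^'d"
  assumes "v \<noteq> 0" and "\<And>i. \<bar>w$i\<bar> \<le> M"
  shows "(\<Sum>i\<in>UNIV. (1 - v$i * v$i / (\<Sum>k\<in>UNIV. v$k * v$k)) * w$i) \<le> M * real CARD('d)"
proof -
  define N where "N = (\<Sum>k\<in>UNIV. v$k * v$k)"
  have "N = norm v ^ 2" unfolding N_def by (simp add: power2_norm_eq_inner inner_vec_def)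
  then have "N > 0" using assms(1) by simp
  have "(1 - v$i * v$i / N) * w$i \<le> M" for i
  proof -
    have "v$i * v$i \<le> N" unfolding N_def by (rule member_le_sum) auto
    then have a: "0 \<le> 1 - v$i * v$i / N" "1 - v$i * v$i / N \<le> 1" using \<open>N > 0\<close> by (auto simp: field_simps)
    have "(1 - v$i * v$i / N) * w$i \<le> (1 - v$i * v$i / N) * \<bar>w$i\<bar>"
      using a by (simp add: mult_left_mono)
    also have "\<dots> \<le> 1 * M"
      using a assms(2)[of i] by (intro mult_mono) auto
    finally show ?thesis by simp
  qed
  then have "(\<Sum>i\<in>UNIV. (1 - v$i * v$i / N) * w$i) \<le> (\<Sum>i\<in>(UNIV::'d set). M)"
    by (intro sum_mono)
  then show ?thesis unfolding N_def by (simp add: mult.commute)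
qed

definition pinning_shell :: "(real^'d \<Rightarrow> real) \<Rightarrow> real \<Rightarrow> real \<Rightarrow> bool" where
  "pinning_shell a s1 s2 \<longleftrightarrow> 0 < s1 \<and> s1 < s2 \<and> s2 < 1/2 \<and>
     (\<forall>z. s1 \<le> sin2sum z \<and> sin2sum z \<le> s2 \<longrightarrow> 2 * pi^2 * real CARD('d) * a z + grad a z \<bullet> sin2sum_grad z \<le> 0)"

lemma Glower_barrier_nonneg:
  fixes a :: "real^'d \<Rightarrow> real" and y :: "real^'d"
  assumes pin: "pinning_shell a s1 s2" and a_nonneg: "\<And>z. 0 \<le> a z" and a: "Ck 2 a"
    and eps: "0 < eps" and C: "0 < C" and S: "sin2sum ((1/eps) *\<^sub>R y) \<le> s2"
  shows "0 \<le> Glower a eps y (Dx (barrier eps c C s1 \<eta> L) (y, s)) (Dxx (barrier eps c C s1 \<eta> L) (y, s))"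
proof (cases "sin2sum ((1/eps) *\<^sub>R y) \<le> s1")
  case True
  then have "Dx (barrier eps c C s1 \<eta> L) (y, s) = 0" "Dxx (barrier eps c C s1 \<eta> L) (y, s) = 0"
    by (simp_all add: Dx_barrier Dxx_barrier vec_eq_iff)
  then show ?thesis
    using Glower_zero_nonneg[OF Ck_imp_continuous_on[OF a] continuous_on_grad[OF a]] by simp
next
  case False
  let ?z = "(1/eps) *\<^sub>R y"
  let ?v = "sin2sum_grad ?z"
  let ?B = "a ?z * (\<Sum>i\<in>UNIV. (1 - ?v$i * ?v$i / (\<Sum>k\<in>UNIV. ?v$k * ?v$k)) * sin2sum_hess ?z $ i) + grad a ?z \<bullet> ?v"
  define m where "m = max 0 (sin2sum ?z - s1)"
  have m: "0 < m" using False unfolding m_def by simp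
  have c: "- 3 * C * m^2 < 0" using C m by simp
  have v: "?v \<noteq> 0"
    using pin S False by (intro sin2sum_grad_neq_0) (auto simp: pinning_shell_def)
  have "a ?z * (\<Sum>i\<in>UNIV. (1 - ?v$i * ?v$i / (\<Sum>k\<in>UNIV. ?v$k * ?v$k)) * sin2sum_hess ?z $ i)
      \<le> a ?z * (2 * pi^2 * real CARD('d))"
    by (intro mult_left_mono tangential_sum_le[OF v abs_sin2sum_hess_le] a_nonneg)
  moreover have "2 * pi^2 * real CARD('d) * a ?z + grad a ?z \<bullet> ?v \<le> 0"
    using pin S False unfolding pinning_shell_def by auto
  ultimately have "?B \<le> 0" by (simp add: algebra_simps)
  then have "0 \<le> (- 3 * C * m^2) / eps^2 * ?B"
    using c by (intro mult_nonpos_nonpos divide_nonpos_nonneg) auto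
  also have "\<dots> = geoG a eps y (Dx (barrier eps c C s1 \<eta> L) (y, s)) (Dxx (barrier eps c C s1 \<eta> L) (y, s))"
    unfolding Dx_barrier Dxx_barrier m_def[symmetric]
    by (rule geoG_radial[OF v _ eps, symmetric]) (use C m in simp)
  also have "\<dots> \<le> Glower a eps y (Dx (barrier eps c C s1 \<eta> L) (y, s)) (Dxx (barrier eps c C s1 \<eta> L) (y, s))"
    using v C m eps unfolding Dx_barrier m_def[symmetric]
    by (intro Glower_ge_geoG Ck_imp_continuous_on[OF a] continuous_on_grad[OF a]) simp
  finally show ?thesis by (simp add: zero_ereal_def)
qed

lemma visc_super_comparison:
  fixes v :: "real^'d \<Rightarrow> real \<Rightarrow> real" and \<phi> :: "(real^'d) \<times> real \<Rightarrow> real"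
  assumes super: "visc_super a eps v" and \<phi>: "Ck 2 \<phi>"
    and cont: "continuous_on (cbox lo hi \<times> {0..T}) (\<lambda>w. v (fst w) (snd w))"
    and strict: "\<And>y s. y \<in> box lo hi \<Longrightarrow> 0 < s \<Longrightarrow> s < T \<Longrightarrow> P y \<Longrightarrow>
      ereal (Dt \<phi> (y, s)) < Glower a eps y (Dx \<phi> (y, s)) (Dxx \<phi> (y, s))"
    and bdry: "\<And>y s. y \<in> cbox lo hi \<Longrightarrow> 0 \<le> s \<Longrightarrow> s \<le> T \<Longrightarrow> y \<notin> box lo hi \<or> s = 0 \<or> s = T \<or> \<not> P y \<Longrightarrow>
      0 \<le> v y s - \<phi> (y, s)"
    and y: "y \<in> cbox lo hi" and s: "0 \<le> s" "s \<le> T"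
  shows "0 \<le> v y s - \<phi> (y, s)"
proof -
  define K where "K = cbox lo hi \<times> {0..T}"
  define \<Phi> where "\<Phi> w = v (fst w) (snd w) - \<phi> w" for w
  have "continuous_on K \<Phi>"
    unfolding \<Phi>_def K_def by (intro continuous_on_diff cont continuous_on_subset[OF Ck_imp_continuous_on[OF \<phi>]]) auto
  moreover have "(y, s) \<in> K" using y s unfolding K_def by simp
  ultimately obtain w1 where w1: "w1 \<in> K" "\<And>w. w \<in> K \<Longrightarrow> \<Phi> w1 \<le> \<Phi> w"
    using continuous_attains_inf[of K \<Phi>] unfolding K_def by (metis compact_Times compact_cbox compact_Icc empty_iff)
  obtain y1 \<tau> where w1_eq: "w1 = (y1, \<tau>)" by (cases w1)
  have "0 \<le> \<Phi> w1"
  proof (rule ccontr)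
    assume neg: "\<not> 0 \<le> \<Phi> w1"
    define U where "U = box lo hi \<times> {0<..<T}"
    have y1: "y1 \<in> box lo hi" "0 < \<tau>" "\<tau> < T" "P y1"
      using bdry[of y1 \<tau>] neg w1(1) unfolding w1_eq K_def \<Phi>_def by force+
    then have U: "open U" "w1 \<in> U" "U \<subseteq> K"
      unfolding U_def K_def w1_eq by (auto intro!: open_Times simp: box_subset_cbox[THEN subsetD])
    have "\<forall>\<^sub>F w in at w1. w \<in> U"
      using eventually_nhds_in_open[OF U(1,2)] by (simp add: eventually_at_filter eventually_mono)
    then have "\<forall>\<^sub>F w in at (y1, \<tau>). v (fst w) (snd w) - \<phi> w \<ge> v y1 \<tau> - \<phi> (y1, \<tau>)"
      unfolding w1_eq by (rule eventually_mono) (use w1(2) U(3) in \<open>auto simp: \<Phi>_def w1_eq\<close>)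
    then have "Glower a eps y1 (Dx \<phi> (y1, \<tau>)) (Dxx \<phi> (y1, \<tau>)) \<le> ereal (Dt \<phi> (y1, \<tau>))"
      using super \<phi> y1(2) unfolding visc_super_def by blast
    then show False using strict[OF y1(1,2,3,4)] by simp
  qed
  then show ?thesis using w1(2)[of "(y, s)"] \<open>(y, s) \<in> K\<close> unfolding \<Phi>_def by simp
qed

lemma exp_weight_exists:
  fixes \<gamma> M t :: real
  assumes "0 < \<gamma>"
  obtains \<eta> L where "0 < \<eta>" "0 < L" "\<eta> * exp (L * t) = \<gamma>" "M \<le> \<eta> * exp (L * (t + 1))"
proof
  define L where "L = max 1 (M / \<gamma>)"
  show "0 < \<gamma> / exp (L * t)" "0 < L" "\<gamma> / exp (L * t) * exp (L * t) = \<gamma>"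
    using assms unfolding L_def by auto
  have "M / \<gamma> \<le> L" unfolding L_def by simp
  then have "M \<le> \<gamma> * L" using assms by (simp add: pos_divide_le_eq mult.commute)
  also have "\<dots> \<le> \<gamma> * exp L" using assms by (intro mult_left_mono) (auto intro: order_trans[OF _ exp_ge_add_one_self])
  also have "\<dots> = \<gamma> / exp (L * t) * exp (L * (t + 1))" by (simp add: distrib_left exp_add)
  finally show "M \<le> \<gamma> / exp (L * t) * exp (L * (t + 1))" .
qed

lemma barrier_strict_subsolution:
  fixes a :: "real^'d \<Rightarrow> real" and y :: "real^'d"
  assumes "pinning_shell a s1 s2" and "\<And>z. 0 \<le> a z" and "Ck 2 a" and "0 < eps" and "0 < C"
    and "0 < \<eta>" and "0 < L" and "sin2sum ((1/eps) *\<^sub>R y) \<le> s2"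
  shows "ereal (Dt (barrier eps c C s1 \<eta> L) (y, s))
    < Glower a eps y (Dx (barrier eps c C s1 \<eta> L) (y, s)) (Dxx (barrier eps c C s1 \<eta> L) (y, s))"
proof -
  have "ereal (Dt (barrier eps c C s1 \<eta> L) (y, s)) < 0" using assms(6,7) by (simp add: Dt_barrier)
  also have "0 \<le> Glower a eps y (Dx (barrier eps c C s1 \<eta> L) (y, s)) (Dxx (barrier eps c C s1 \<eta> L) (y, s))"
    using assms(1-5,8) by (rule Glower_barrier_nonneg)
  finally show ?thesis .
qed

lemma mem_cube_iff:
  fixes y n :: "real^'d"
  shows "y \<in> cbox (\<chi> i. e * n$i - e/4) (\<chi> i. e * n$i + e/4) \<longleftrightarrow> (\<forall>i. \<bar>y$i - e * n$i\<bar> \<le> e/4)"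
proof -
  have "(e * n$i - e/4 \<le> y$i \<and> y$i \<le> e * n$i + e/4) \<longleftrightarrow> \<bar>y$i - e * n$i\<bar> \<le> e/4" for i
    by arith
  then show ?thesis unfolding mem_box_cart by simp
qed

lemma barrier_below_supersolution:
  fixes a :: "real^'d \<Rightarrow> real" and v :: "real^'d \<Rightarrow> real \<Rightarrow> real" and n :: "real^'d" and eps :: real
  defines "Q \<equiv> cbox (\<chi> i. eps * n$i - eps/4) (\<chi> i. eps * n$i + eps/4)"
  assumes pin: "pinning_shell a s1 s2" and a_nonneg: "\<And>z. 0 \<le> a z" and a: "Ck 2 a" and eps: "0 < eps"
    and super: "visc_super a eps v" and cont: "continuous_on (Q \<times> {0..T}) (\<lambda>w. v (fst w) (snd w))"
    and n: "\<forall>i. n$i \<in> \<int>"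
    and lower: "\<And>y s. y \<in> Q \<Longrightarrow> 0 \<le> s \<Longrightarrow> s \<le> T \<Longrightarrow> m \<le> v y s"
    and init: "\<And>y. y \<in> Q \<Longrightarrow> c \<le> v y 0"
    and C: "0 < C" "c - m + 1 \<le> C * ramp3 (s2 - s1)"
    and \<eta>: "0 < \<eta>" "0 < L" "c - m \<le> \<eta> * exp (L * T)"
    and y: "y \<in> Q" and s: "0 \<le> s" "s \<le> T"
  shows "barrier eps c C s1 \<eta> L (y, s) \<le> v y s"
proof -
  have s12: "0 < s1" "s1 < s2" "s2 < 1/2" using pin by (auto simp: pinning_shell_def)
  have ramp_nonneg: "0 \<le> C * ramp3 (sin2sum ((1/eps) *\<^sub>R y) - s1)" for y
    using C(1) ramp3_nonneg by simp
  have bound: "m - c + C * ramp3 (sin2sum ((1/eps) *\<^sub>R y) - s1) + \<eta> * exp (L * s)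
      \<le> v y s - barrier eps c C s1 \<eta> L (y, s)" if "y \<in> Q" "0 \<le> s" "s \<le> T" for y s
    using lower[OF that] unfolding barrier_def by simp
  have shell: "0 \<le> v y s - barrier eps c C s1 \<eta> L (y, s)"
    if "y \<in> Q" "0 \<le> s" "s \<le> T" "s2 \<le> sin2sum ((1/eps) *\<^sub>R y)" for y s
  proof -
    have "C * ramp3 (s2 - s1) \<le> C * ramp3 (sin2sum ((1/eps) *\<^sub>R y) - s1)"
      using C(1) that(4) by (intro mult_left_mono ramp3_mono) auto
    moreover have "0 < \<eta> * exp (L * s)" using \<eta>(1) by simp
    ultimately show ?thesis using bound[OF that(1-3)] C(2) by linarith
  qed
  have "0 \<le> v y s - barrier eps c C s1 \<eta> L (y, s)"
  proof (rule visc_super_comparison[OF super Ck2_barrier cont[unfolded Q_def],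
        where P = "\<lambda>y. sin2sum ((1/eps) *\<^sub>R y) < s2"])
    fix y :: "real^'d" and s assume "sin2sum ((1/eps) *\<^sub>R y) < s2"
    then show "ereal (Dt (barrier eps c C s1 \<eta> L) (y, s))
        < Glower a eps y (Dx (barrier eps c C s1 \<eta> L) (y, s)) (Dxx (barrier eps c C s1 \<eta> L) (y, s))"
      by (intro barrier_strict_subsolution[OF pin a_nonneg a eps C(1) \<eta>(1,2)]) simp
  next
    fix y s assume ys: "y \<in> cbox (\<chi> i. eps * n$i - eps/4) (\<chi> i. eps * n$i + eps/4)" "0 \<le> s" "s \<le> T"
      and "y \<notin> box (\<chi> i. eps * n$i - eps/4) (\<chi> i. eps * n$i + eps/4) \<or> s = 0 \<or> s = T
           \<or> \<not> sin2sum ((1/eps) *\<^sub>R y) < s2"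
    then consider "s2 \<le> sin2sum ((1/eps) *\<^sub>R y)" | "s = 0" | "s = T"
      using sin2sum_cube_boundary[OF eps n ys(1)] s12(3) by force
    then show "0 \<le> v y s - barrier eps c C s1 \<eta> L (y, s)"
    proof cases
      case 1
      then show ?thesis using shell ys unfolding Q_def by blast
    next
      case 2
      then show ?thesis using init[of y] ys(1) ramp_nonneg[of y] \<eta>(1) unfolding Q_def barrier_def by simp
    next
      case 3
      then show ?thesis using bound[of y s] ys ramp_nonneg[of y] \<eta>(3) unfolding Q_def by simp
    qed
  qed (use y s in \<open>simp_all add: Q_def\<close>)
  then show ?thesis by simp
qed

lemma supersolution_pinned:
  fixes a :: "real^'d \<Rightarrow> real" and v :: "real^'d \<Rightarrow> real \<Rightarrow> real" and n :: "real^'d"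
  assumes pin: "pinning_shell a s1 s2" and a_nonneg: "\<And>z. 0 \<le> a z" and a: "Ck 2 a" and eps: "0 < eps"
    and super: "visc_super a eps v" and cont: "continuous_on {w. 0 \<le> snd w} (\<lambda>w. v (fst w) (snd w))"
    and n: "\<forall>i. n$i \<in> \<int>" and t: "0 < t"
    and init: "\<And>y. (\<forall>i. \<bar>y$i - eps * n$i\<bar> \<le> eps/4) \<Longrightarrow> c \<le> v y 0"
  shows "c \<le> v (eps *\<^sub>R n) t"
proof (rule ccontr)
  assume "\<not> c \<le> v (eps *\<^sub>R n) t"
  define \<gamma> where "\<gamma> = c - v (eps *\<^sub>R n) t"
  have \<gamma>: "0 < \<gamma>" using \<open>\<not> c \<le> v (eps *\<^sub>R n) t\<close> unfolding \<gamma>_def by simp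
  have s12: "0 < s1" "s1 < s2" "s2 < 1/2" using pin by (auto simp: pinning_shell_def)
  define Q :: "(real^'d) set" where "Q = cbox (\<chi> i. eps * n$i - eps/4) (\<chi> i. eps * n$i + eps/4)"
  define T where "T = t + 1"
  have cont_Q: "continuous_on (Q \<times> {0..T}) (\<lambda>w. v (fst w) (snd w))"
    by (rule continuous_on_subset[OF cont]) auto
  have centre: "(eps *\<^sub>R n, t) \<in> Q \<times> {0..T}" using eps t by (simp add: Q_def T_def mem_cube_iff)
  obtain m where m: "\<And>w. w \<in> Q \<times> {0..T} \<Longrightarrow> m \<le> v (fst w) (snd w)"
    using continuous_attains_inf[OF _ _ cont_Q] centre unfolding Q_def
    by (metis compact_Times compact_cbox compact_Icc empty_iff)
  have "m < c" using m[OF centre] \<gamma> unfolding \<gamma>_def by simp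
  obtain \<eta> L where \<eta>: "0 < \<eta>" "0 < L" "\<eta> * exp (L * t) = \<gamma> / 2" "c - m \<le> \<eta> * exp (L * T)"
    using exp_weight_exists[where \<gamma> = "\<gamma> / 2" and M = "c - m" and t = t] \<gamma> unfolding T_def by auto
  define C where "C = (c - m + 1) / (s2 - s1)^3"
  have C: "0 < C" "c - m + 1 \<le> C * ramp3 (s2 - s1)"
    unfolding C_def ramp3_def using \<open>m < c\<close> s12 by auto
  have "barrier eps c C s1 \<eta> L (eps *\<^sub>R n, t) \<le> v (eps *\<^sub>R n) t"
    using centre m init
    by (intro barrier_below_supersolution[OF pin a_nonneg a eps super cont_Q[unfolded Q_def] n _ _ C \<eta>(1,2,4)])
      (auto simp: Q_def mem_cube_iff)
  moreover have "barrier eps c C s1 \<eta> L (eps *\<^sub>R n, t) = c - \<gamma> / 2"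
    using eps s12 \<eta>(3) sin2sum_integer[OF n] unfolding barrier_def by (simp add: ramp3_eq_0)
  ultimately show False using \<gamma> \<gamma>_def by linarith
qed

section \<open>Half-relaxed limits\<close>

lemma hr_limsup_geI:
  assumes "\<And>r \<delta>. 0 < r \<Longrightarrow> 0 < \<delta> \<Longrightarrow> \<exists>e y. 0 < e \<and> e < r \<and> norm (y - x) < r \<and> c - \<delta> \<le> u e y t"
  shows "ereal c \<le> hr_limsup u x t"
  unfolding hr_limsup_def le_INF_iff
proof (intro ballI)
  fix r :: real assume "r \<in> {0<..}"
  let ?S = "{(e, y, s). 0 < e \<and> e < r \<and> norm (y - x) + \<bar>s - t\<bar> < r}"
  have "\<exists>w\<in>?S. z < ereal (u (fst w) (fst (snd w)) (snd (snd w)))" if "z < ereal c" for z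
  proof -
    obtain c' where c': "c' < c" "z \<le> ereal c'"
      using \<open>z < ereal c\<close> by (cases z) (auto intro: that[of "c - 1"])
    obtain e y where ey: "0 < e" "e < r" "norm (y - x) < r" "c - (c - c') / 2 \<le> u e y t"
      using assms[of r "(c - c') / 2"] \<open>r \<in> {0<..}\<close> c'(1) by auto
    then have "(e, y, t) \<in> ?S" by simp
    moreover have "z < ereal (u e y t)"
    proof -
      have "c' < u e y t" using ey(4) c'(1) by (simp add: field_simps)
      then have "ereal c' < ereal (u e y t)" by simp
      then show ?thesis by (rule le_less_trans[OF c'(2)])
    qed
    ultimately show ?thesis by force
  qed
  then show "ereal c \<le> (SUP w\<in>?S. ereal (u (fst w) (fst (snd w)) (snd (snd w))))"
    unfolding le_SUP_iff by blast
qed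

lemma hr_liminf_eq_uminus: "hr_liminf u x t = - hr_limsup (\<lambda>e y s. - u e y s) x t"
proof -
  have "hr_limsup (\<lambda>e y s. - u e y s) x t = - hr_liminf u x t"
    unfolding hr_limsup_def hr_liminf_def
    by (simp only: uminus_ereal.simps(1)[symmetric] ereal_SUP_uminus_eq ereal_INF_uminus_eq)
  then show ?thesis by simp
qed

lemma lattice_point_near:
  fixes x :: "real^'d"
  assumes "0 < e"
  obtains n :: "real^'d" where "\<forall>i. n$i \<in> \<int>" "\<forall>i. \<bar>e * n$i - x$i\<bar> \<le> e"
proof
  define n :: "real^'d" where "n = (\<chi> i. of_int \<lfloor>x$i / e\<rfloor>)"
  show "\<forall>i. n$i \<in> \<int>" unfolding n_def by simp
  show "\<forall>i. \<bar>e * n$i - x$i\<bar> \<le> e"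
  proof
    fix i
    have fl: "of_int \<lfloor>x$i / e\<rfloor> \<le> x$i / e" "x$i / e < of_int \<lfloor>x$i / e\<rfloor> + 1" by linarith+
    have "e * of_int \<lfloor>x$i / e\<rfloor> \<le> x$i" using mult_left_mono[OF fl(1), of e] assms by simp
    moreover have "x$i < e * of_int \<lfloor>x$i / e\<rfloor> + e"
      using mult_strict_left_mono[OF fl(2) assms] assms by (simp add: distrib_left)
    ultimately show "\<bar>e * n$i - x$i\<bar> \<le> e" unfolding n_def by simp
  qed
qed

lemma norm_le_card_mult:
  fixes z :: "real^'d"
  assumes "\<forall>i. \<bar>z$i\<bar> \<le> c"
  shows "norm z \<le> real CARD('d) * c"
proof -
  have "norm z \<le> (\<Sum>i\<in>UNIV. \<bar>z$i\<bar>)" by (rule norm_le_l1_cart)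
  also have "\<dots> \<le> (\<Sum>i\<in>(UNIV::'d set). c)" using assms by (intro sum_mono) auto
  finally show ?thesis by simp
qed

lemma hr_limsup_ge_initial:
  fixes a :: "real^'d \<Rightarrow> real" and u0 :: "real^'d \<Rightarrow> real" and u :: "real \<Rightarrow> real^'d \<Rightarrow> real \<Rightarrow> real"
  assumes pin: "pinning_shell a s1 s2" and a_nonneg: "\<And>z. 0 \<le> a z" and a: "Ck 2 a"
    and u0: "continuous_on UNIV u0"
    and super: "\<And>eps. 0 < eps \<Longrightarrow> visc_super a eps (u eps)"
    and cont: "\<And>eps. 0 < eps \<Longrightarrow> continuous_on {w. 0 \<le> snd w} (\<lambda>w. u eps (fst w) (snd w))"
    and init: "\<And>eps y. 0 < eps \<Longrightarrow> u eps y 0 = u0 y"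
    and t: "0 < t"
  shows "ereal (u0 x) \<le> hr_limsup u x t"
proof (rule hr_limsup_geI)
  fix r \<delta> :: real assume r: "0 < r" and \<delta>: "0 < \<delta>"
  obtain \<rho> where \<rho>: "0 < \<rho>" "\<And>y. dist y x < \<rho> \<Longrightarrow> dist (u0 y) (u0 x) < \<delta>"
    using u0 \<delta> unfolding continuous_on_iff by (meson UNIV_I)
  define D where "D = real CARD('d)"
  have D: "1 \<le> D" unfolding D_def by (simp add: Suc_leI)
  define e where "e = min r \<rho> / (4 * D)"
  have e: "0 < e" "4 * (D * e) = min r \<rho>" "e \<le> D * e"
    using r \<rho> D mult_right_mono[OF D, of e] by (simp_all add: e_def)
  have min: "min r \<rho> \<le> r" "min r \<rho> \<le> \<rho>" by auto
  obtain n :: "real^'d" where n: "\<forall>i. n$i \<in> \<int>" "\<forall>i. \<bar>e * n$i - x$i\<bar> \<le> e"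
    using lattice_point_near[OF e(1)] by blast
  have "norm (e *\<^sub>R n - x) \<le> D * e" unfolding D_def using n(2) by (intro norm_le_card_mult) simp
  then have near: "norm (e *\<^sub>R n - x) < r" using e min by linarith
  have "e < r" using e min by linarith
  have "u0 x - \<delta> \<le> u e (e *\<^sub>R n) t"
  proof (rule supersolution_pinned[OF pin a_nonneg a e(1) super[OF e(1)] cont[OF e(1)] n(1) t])
    fix y assume y: "\<forall>i. \<bar>y$i - e * n$i\<bar> \<le> e/4"
    have "\<bar>(y - x)$i\<bar> \<le> 2 * e" for i
      using y[rule_format, of i] n(2)[rule_format, of i] e(1) unfolding vector_minus_component by arith
    then have "\<forall>i. \<bar>(y - x)$i\<bar> \<le> 2 * e" by blast
    then have "norm (y - x) \<le> D * (2 * e)" unfolding D_def by (rule norm_le_card_mult)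
    then have "dist (u0 y) (u0 x) < \<delta>" using \<rho>(2)[of y] e min by (simp add: dist_norm)
    then show "u0 x - \<delta> \<le> u e y 0" using init[OF e(1)] by (simp add: dist_real_def)
  qed
  then show "\<exists>e y. 0 < e \<and> e < r \<and> norm (y - x) < r \<and> u0 x - \<delta> \<le> u e y t"
    using e(1) \<open>e < r\<close> near by (intro exI[of _ e] exI[of _ "e *\<^sub>R n"]) auto
qed

lemma half_relaxed_limits_pinned:
  fixes a :: "real^'d \<Rightarrow> real" and u0 :: "real^'d \<Rightarrow> real" and u :: "real \<Rightarrow> real^'d \<Rightarrow> real \<Rightarrow> real"
  assumes pin: "pinning_shell a s1 s2" and a_nonneg: "\<And>z. 0 \<le> a z" and a: "Ck 2 a"
    and u0: "continuous_on UNIV u0" and sol: "\<And>eps. 0 < eps \<Longrightarrow> visc_solution a eps u0 (u eps)"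
    and t: "0 < t"
  shows "ereal (u0 x) \<le> hr_limsup u x t" and "hr_liminf u x t \<le> ereal (u0 x)"
proof -
  show "ereal (u0 x) \<le> hr_limsup u x t"
    using sol by (intro hr_limsup_ge_initial[OF pin a_nonneg a u0 _ _ _ t]) (auto simp: visc_solution_def)
  have "ereal (- u0 x) \<le> hr_limsup (\<lambda>e y s. - u e y s) x t"
    using sol
    by (intro hr_limsup_ge_initial[OF pin a_nonneg a continuous_on_minus[OF u0] _ _ _ t])
      (auto simp: visc_solution_def intro: visc_super_uminus continuous_on_minus)
  then show "hr_liminf u x t \<le> ereal (u0 x)"
    unfolding hr_liminf_eq_uminus by (simp add: ereal_uminus_le_reorder)
qed

section \<open>Density of pinning coefficients\<close>

lemma integer_part_decompose:
  fixes z :: "real^'d"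
  obtains z' n where "z' \<in> cbox 0 1" "\<forall>i. n$i \<in> \<int>" "z = z' + n"
proof
  define n :: "real^'d" where "n = (\<chi> i. of_int \<lfloor>z$i\<rfloor>)"
  show "z - n \<in> cbox 0 1" unfolding n_def mem_box_cart
    by (auto simp: floor_le_iff) linarith
  show "\<forall>i. n$i \<in> \<int>" unfolding n_def by simp
  show "z = (z - n) + n" by simp
qed

lemma periodic_continuous_bounded:
  fixes f :: "real^'d \<Rightarrow> 'b::real_normed_vector"
  assumes cont: "continuous_on UNIV f" and per: "\<And>z n. \<forall>i. n$i \<in> \<int> \<Longrightarrow> f (z + n) = f z"
  obtains B where "\<And>z. norm (f z) \<le> B"
proof -
  have "bounded (f ` cbox 0 1)"
    by (intro compact_imp_bounded compact_continuous_image continuous_on_subset[OF cont]) auto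
  then obtain B where B: "\<And>z. z \<in> cbox 0 1 \<Longrightarrow> norm (f z) \<le> B"
    unfolding bounded_iff by blast
  show ?thesis
  proof
    fix z :: "real^'d"
    obtain z' n where "z' \<in> cbox 0 1" "\<forall>i. n$i \<in> \<int>" "z = z' + n" by (rule integer_part_decompose)
    then show "norm (f z) \<le> B" using B per by simp
  qed
qed

lemma grad_add_integer:
  fixes p :: "real^'d \<Rightarrow> real"
  assumes per: "zperiodic p" and d: "p differentiable (at z)" and n: "\<forall>i. n$i \<in> \<int>"
  shows "grad p (z + n) = grad p z"
proof -
  have D: "(p has_derivative frechet_derivative p (at z)) (at z)" using d frechet_derivative_works by blast
  have tr: "((\<lambda>w. w - n) has_derivative (\<lambda>h. h)) (at (z + n))"
    by (rule derivative_eq_intros refl)+ simp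
  have "((\<lambda>w. p (w - n)) has_derivative (\<lambda>h. frechet_derivative p (at z) h)) (at (z + n))"
    using has_derivative_compose[OF tr, of p] D by simp
  moreover have "p (w - n) = p w" for w
  proof -
    have "\<forall>i. (- n)$i \<in> \<int>" using n by simp
    then have "p (w + - n) = p w" using per unfolding zperiodic_def by blast
    then show ?thesis by simp
  qed
  ultimately have "(p has_derivative frechet_derivative p (at z)) (at (z + n))" by simp
  then show ?thesis unfolding grad_def by (simp add: frechet_derivative_at[symmetric])
qed

lemma periodic_grad_bounded:
  fixes p :: "real^'d \<Rightarrow> real"
  assumes "zperiodic p" and "Ck 2 p"
  obtains B where "\<And>z. norm (grad p z) \<le> B"
proof -
  have "p differentiable (at z)" for z using assms(2) by (simp add: numeral_2_eq_2)
  from periodic_continuous_bounded[OF continuous_on_grad[OF assms(2)] grad_add_integer[OF assms(1) this]]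
  show ?thesis using that by blast
qed

definition torus_embedding :: "real^'d \<Rightarrow> (real^'d) \<times> (real^'d)" where
  "torus_embedding z = ((\<chi> i. cos (2 * pi * z$i)), (\<chi> i. sin (2 * pi * z$i)))"

lemma continuous_on_torus_embedding: "continuous_on UNIV torus_embedding"
  unfolding torus_embedding_def by (intro continuous_intros)

lemma Ck_torus_embedding_inner: "Ck k (\<lambda>z::real^'d. torus_embedding z \<bullet> c)"
proof -
  have "Ck k (\<lambda>z::real^'d. \<Sum>i\<in>UNIV. cos (2 * pi * z$i) * (fst c)$i + sin (2 * pi * z$i) * (snd c)$i)"
    by (intro Ck_sum Ck_add Ck_mult Ck_const Ck_compose[OF real_Ck_cos] Ck_compose[OF real_Ck_sin]
        Ck_component bounded_linear_intros) auto
  then show ?thesis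
    unfolding torus_embedding_def by (cases c) (simp add: inner_prod_def inner_vec_def sum.distrib)
qed

lemma Ck_polynomial_torus_embedding:
  assumes "real_polynomial_function P"
  shows "Ck k (\<lambda>z::real^'d. P (torus_embedding z))"
  using assms
proof (induction P rule: real_polynomial_function.induct)
  case (linear f)
  have "f (torus_embedding z) = (\<Sum>b\<in>Basis. (torus_embedding z \<bullet> b) * f b)" for z
  proof -
    have "f (torus_embedding z) = f (\<Sum>b\<in>Basis. (torus_embedding z \<bullet> b) *\<^sub>R b)"
      by (simp add: euclidean_representation)
    also have "\<dots> = (\<Sum>b\<in>Basis. (torus_embedding z \<bullet> b) * f b)"
      using linear.hyps by (simp add: linear_sum linear_scale bounded_linear.linear)
    finally show ?thesis .
  qed
  moreover have "Ck k (\<lambda>z::real^'d. \<Sum>b\<in>Basis. (torus_embedding z \<bullet> b) * f b)"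
    by (intro Ck_sum Ck_mult Ck_torus_embedding_inner Ck_const) auto
  ultimately show ?case by simp
next
  case (const c) then show ?case by (rule Ck_const)
next
  case (add f g) show ?case using add.IH by (rule Ck_add)
next
  case (mult f g) show ?case using mult.IH by (rule Ck_mult)
qed

lemma torus_embedding_add_integer:
  assumes "\<forall>i. n$i \<in> \<int>"
  shows "torus_embedding (z + n) = torus_embedding z"
proof -
  have "cos (2 * pi * n$i) = 1 \<and> sin (2 * pi * n$i) = 0" for i
    using assms by (metis Ints_cases cos_int_2pin sin_int_2pin mult.commute mult.assoc)
  then show ?thesis
    unfolding torus_embedding_def by (simp add: vec_eq_iff distrib_left cos_add sin_add)
qed

lemma torus_embedding_eq_imp_integer:
  assumes "torus_embedding z = torus_embedding z'"
  shows "(z - z')$i \<in> \<int>"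
proof -
  have c: "cos (2 * pi * z$i) = cos (2 * pi * z'$i)" and s: "sin (2 * pi * z$i) = sin (2 * pi * z'$i)"
    using assms unfolding torus_embedding_def by (auto simp: vec_eq_iff)
  have "cos (2 * pi * z$i - 2 * pi * z'$i) = 1"
    unfolding cos_diff c s using sin_cos_squared_add[of "2 * pi * z'$i"] by (simp add: power2_eq_square)
  then obtain k :: int where "2 * pi * z$i - 2 * pi * z'$i = k * 2 * pi" by (auto simp: cos_one_2pi_int)
  then have "2 * pi * (z$i - z'$i) = 2 * pi * k" by (simp add: algebra_simps)
  then have "z$i - z'$i = k" by simp
  then show ?thesis by simp
qed

lemma continuous_on_factor_compact:
  fixes e :: "'a::t2_space \<Rightarrow> 'b::t2_space" and g :: "'a \<Rightarrow> 'c::topological_space"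
  assumes Q: "compact Q" and e: "continuous_on Q e" and g: "continuous_on Q g"
    and G: "\<And>z. z \<in> Q \<Longrightarrow> G (e z) = g z"
  shows "continuous_on (e ` Q) G"
  unfolding continuous_on_closed_vimage[OF compact_imp_closed[OF compact_continuous_image[OF e Q]]]
proof (intro allI impI)
  fix B :: "'c set" assume "closed B"
  have closed: "closed (Q \<inter> g -` B)"
    by (rule continuous_closed_preimage[OF g compact_imp_closed[OF Q] \<open>closed B\<close>])
  have "compact (Q \<inter> g -` B)"
    using compact_Int_closed[OF Q closed] by (simp add: Int_assoc[symmetric])
  then have "compact (e ` (Q \<inter> g -` B))"
    by (rule compact_continuous_image[OF continuous_on_subset[OF e], rotated]) auto
  moreover have "G -` B \<inter> e ` Q = e ` (Q \<inter> g -` B)" using G by auto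
  ultimately show "closed (G -` B \<inter> e ` Q)" by (simp add: compact_imp_closed)
qed
lemma periodic_smooth_approx:
  fixes g :: "real^'d \<Rightarrow> real"
  assumes per: "zperiodic g" and g: "continuous_on UNIV g" and "0 < \<epsilon>"
  obtains p where "zperiodic p" "smooth_fun p" "\<And>x. \<bar>p x - g x\<bar> < \<epsilon>"
proof -
  define Q :: "(real^'d) set" where "Q = cbox 0 1"
  have lift: "\<exists>z'\<in>Q. torus_embedding z' = torus_embedding z" for z
  proof -
    obtain z' n where "z' \<in> cbox 0 1" "\<forall>i. n$i \<in> \<int>" "z = z' + n" by (rule integer_part_decompose)
    then show ?thesis unfolding Q_def using torus_embedding_add_integer by metis
  qed
  define G where "G q = g (SOME z. z \<in> Q \<and> torus_embedding z = q)" for q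
  have G: "G (torus_embedding z) = g z" for z
  proof -
    define z' where "z' = (SOME z'. z' \<in> Q \<and> torus_embedding z' = torus_embedding z)"
    have "\<exists>z'. z' \<in> Q \<and> torus_embedding z' = torus_embedding z" using lift by blast
    from someI_ex[OF this] have "torus_embedding z' = torus_embedding z" unfolding z'_def by blast
    then have "\<forall>i. (z' - z)$i \<in> \<int>" using torus_embedding_eq_imp_integer by blast
    then have "g (z + (z' - z)) = g z" using per unfolding zperiodic_def by blast
    then show ?thesis unfolding G_def z'_def[symmetric] by simp
  qed
  have "continuous_on (torus_embedding ` Q) G"
    by (rule continuous_on_factor_compact) (auto simp: Q_def G intro: continuous_on_subset[OF continuous_on_torus_embedding] continuous_on_subset[OF g])
  moreover have "compact (torus_embedding ` Q)"
    unfolding Q_def by (intro compact_continuous_image continuous_on_subset[OF continuous_on_torus_embedding]) auto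
  ultimately obtain P where P: "real_polynomial_function P" "\<And>q. q \<in> torus_embedding ` Q \<Longrightarrow> \<bar>G q - P q\<bar> < \<epsilon>"
    using Stone_Weierstrass_real_polynomial_function \<open>0 < \<epsilon>\<close> by blast
  show ?thesis
  proof
    show "zperiodic (\<lambda>z. P (torus_embedding z))"
      unfolding zperiodic_def by (auto simp: torus_embedding_add_integer)
    show "smooth_fun (\<lambda>z. P (torus_embedding z))"
      unfolding smooth_fun_def using Ck_polynomial_torus_embedding[OF P(1)] by blast
    fix x
    have "torus_embedding x \<in> torus_embedding ` Q" using lift[of x] by (metis image_eqI)
    then show "\<bar>P (torus_embedding x) - g x\<bar> < \<epsilon>" using P(2) G by (metis abs_minus_commute)
  qed
qed

lemma cos_ge_half: "\<bar>x::real\<bar> \<le> 1 \<Longrightarrow> 1/2 \<le> cos x"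
proof -
  assume x: "\<bar>x\<bar> \<le> 1"
  have "cos (pi/3) \<le> cos \<bar>x\<bar>" using x pi_gt3 by (intro cos_monotone_0_pi_le) auto
  then show ?thesis by (cases "x \<ge> 0") (simp_all add: cos_60)
qed

text \<open>Near the level \<open>sin2sum = 1/4\<close> the bump contributes the drift \<open>- \<sigma> \<omega> cos (\<dots>) D sin2sum\<close>,
  whose size \<open>\<sigma> \<omega>\<close> beats every other term once the frequency \<open>\<omega>\<close> is large.\<close>

lemma grad_bump:
  fixes p :: "real^'d \<Rightarrow> real"
  assumes "p differentiable (at z)"
  shows "grad (\<lambda>z. p z + \<sigma> * sin (\<omega> * (1/4 - sin2sum z))) z
    = grad p z - (\<sigma> * \<omega> * cos (\<omega> * (1/4 - sin2sum z))) *\<^sub>R sin2sum_grad z"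
proof -
  have Dp: "(p has_derivative frechet_derivative p (at z)) (at z)" using assms frechet_derivative_works by blast
  have D: "((\<lambda>z. p z + \<sigma> * sin (\<omega> * (1/4 - sin2sum z))) has_derivative
      (\<lambda>h. frechet_derivative p (at z) h - (\<sigma> * \<omega> * cos (\<omega> * (1/4 - sin2sum z))) * (sin2sum_grad z \<bullet> h))) (at z)"
    by (rule has_derivative_eq_rhs, (rule derivative_eq_intros Dp has_derivative_sin2sum refl)+)
      (auto simp: fun_eq_iff algebra_simps)
  show ?thesis
    unfolding grad_def frechet_derivative_at[OF D, symmetric] by (simp add: vec_eq_iff inner_axis)
qed

lemma pinning_shell_bump:
  fixes p :: "real^'d \<Rightarrow> real"
  assumes p: "\<And>z. p differentiable (at z)" and grad_p: "\<And>z. norm (grad p z) \<le> B"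
    and p_le: "\<And>z. p z \<le> \<Lambda> - \<sigma>" and \<sigma>: "0 < \<sigma>" and \<omega>: "8 \<le> \<omega>"
    and large: "2 * pi^2 * real CARD('d) * \<Lambda> + real CARD('d) * B * pi \<le> \<sigma> * \<omega>"
  shows "pinning_shell (\<lambda>z. p z + \<sigma> * sin (\<omega> * (1/4 - sin2sum z))) (1/4 - 1/\<omega>) (1/4 + 1/\<omega>)"
  unfolding pinning_shell_def
proof (intro conjI allI impI)
  have il: "1/\<omega> \<le> 1/8" "0 < 1/\<omega>" using \<omega> by (auto simp: divide_simps)
  then show "0 < 1/4 - 1/\<omega>" "1/4 - 1/\<omega> < 1/4 + 1/\<omega>" "1/4 + 1/\<omega> < 1/2" by linarith+
  fix z :: "real^'d" assume S: "1/4 - 1/\<omega> \<le> sin2sum z \<and> sin2sum z \<le> 1/4 + 1/\<omega>"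
  define a where "a z = p z + \<sigma> * sin (\<omega> * (1/4 - sin2sum z))" for z
  define D where "D = real CARD('d)"
  let ?c = "cos (\<omega> * (1/4 - sin2sum z))"
  let ?v = "sin2sum_grad z"
  have ga: "grad a z \<bullet> ?v = grad p z \<bullet> ?v - \<sigma> * \<omega> * ?c * (?v \<bullet> ?v)"
    unfolding a_def grad_bump[OF p] by (simp add: inner_diff_left)
  have "\<bar>1/4 - sin2sum z\<bar> \<le> 1/\<omega>" using S by auto
  then have "\<bar>\<omega> * (1/4 - sin2sum z)\<bar> \<le> \<omega> * (1/\<omega>)"
    using \<omega> unfolding abs_mult by (intro mult_mono) auto
  then have "1/2 \<le> ?c" using \<omega> by (intro cos_ge_half) simp
  moreover have "2 \<le> ?v \<bullet> ?v" using S il by (intro sin2sum_grad_inner_self_ge_2) linarith+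
  ultimately have "\<sigma> * \<omega> * (1/2) * 2 \<le> \<sigma> * \<omega> * ?c * (?v \<bullet> ?v)"
    using \<sigma> \<omega> by (intro mult_mono) auto
  then have drift: "\<sigma> * \<omega> \<le> \<sigma> * \<omega> * ?c * (?v \<bullet> ?v)" by simp
  have grad_p_v: "grad p z \<bullet> ?v \<le> D * B * pi"
  proof -
    have "norm ?v \<le> D * pi" unfolding D_def using abs_sin2sum_grad_le by (intro norm_le_card_mult) blast
    then have "grad p z \<bullet> ?v \<le> B * (D * pi)"
      using norm_cauchy_schwarz[of "grad p z" ?v] grad_p[of z] by (meson mult_mono norm_ge_zero order_trans)
    then show ?thesis by (simp add: ac_simps)
  qed
  have curvature: "2 * pi^2 * D * a z \<le> 2 * pi^2 * D * \<Lambda>"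
  proof -
    have "\<sigma> * sin (\<omega> * (1/4 - sin2sum z)) \<le> \<sigma> * 1" using \<sigma> by (intro mult_left_mono) auto
    then show ?thesis using p_le[of z] unfolding a_def D_def by (intro mult_left_mono) auto
  qed
  show "2 * pi^2 * real CARD('d) * a z + grad a z \<bullet> ?v \<le> 0"
    using drift grad_p_v curvature large unfolding ga D_def[symmetric] by linarith
qed

lemma pinning_perturbation_exists:
  fixes p :: "real^'d \<Rightarrow> real"
  assumes per: "zperiodic p" and smooth: "smooth_fun p" and bounds: "\<And>z. 1 + \<sigma> \<le> p z \<and> p z \<le> \<Lambda> - \<sigma>"
    and \<sigma>: "0 < \<sigma>"
  obtains a where "zperiodic a" "smooth_fun a" "\<forall>x. a x \<in> {1..\<Lambda>}" "\<exists>s1 s2. pinning_shell a s1 s2"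
    "\<forall>x. \<bar>a x - p x\<bar> \<le> \<sigma>"
proof -
  have p: "Ck 2 p" using smooth unfolding smooth_fun_def by blast
  obtain B where B: "\<And>z. norm (grad p z) \<le> B" using periodic_grad_bounded[OF per p] by blast
  define \<omega> where "\<omega> = max 8 ((2 * pi^2 * real CARD('d) * \<Lambda> + real CARD('d) * B * pi) / \<sigma>)"
  have \<omega>: "8 \<le> \<omega>" "2 * pi^2 * real CARD('d) * \<Lambda> + real CARD('d) * B * pi \<le> \<sigma> * \<omega>"
    using \<sigma> by (auto simp: \<omega>_def max_def field_simps)
  define a where "a z = p z + \<sigma> * sin (\<omega> * (1/4 - sin2sum z))" for z
  have close: "\<bar>a x - p x\<bar> \<le> \<sigma>" for x
  proof -
    have "\<bar>\<sigma> * sin (\<omega> * (1/4 - sin2sum x))\<bar> \<le> \<sigma> * 1"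
      unfolding abs_mult using \<sigma> by (intro mult_mono) auto
    then show ?thesis by (simp add: a_def)
  qed
  show ?thesis
  proof
    show "zperiodic a"
      using per unfolding zperiodic_def a_def by (simp add: sin2sum_add_integer)
    show "smooth_fun a"
      using smooth unfolding smooth_fun_def a_def
      by (intro allI Ck_add Ck_mult Ck_const Ck_diff Ck_compose[OF real_Ck_sin]
          Ck_sin2sum_linear[OF bounded_linear_ident]) auto
    show "\<forall>x. a x \<in> {1..\<Lambda>}"
    proof
      fix x show "a x \<in> {1..\<Lambda>}"
        using close[of x] bounds[of x] unfolding atLeastAtMost_iff abs_le_iff by linarith
    qed
    show "\<exists>s1 s2. pinning_shell a s1 s2"
      unfolding a_def
      using pinning_shell_bump[OF _ B _ \<sigma> \<omega>] p bounds by (force simp: numeral_2_eq_2)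
    show "\<forall>x. \<bar>a x - p x\<bar> \<le> \<sigma>" using close by blast
  qed
qed

lemma shrink_to_midpoint:
  fixes y \<Lambda> \<theta> :: real
  defines "c \<equiv> (1 + \<Lambda>) / 2" and "m \<equiv> \<theta> * (\<Lambda> - 1) / 2"
  assumes y: "y \<in> {1..\<Lambda>}" and \<theta>: "0 \<le> \<theta>" "\<theta> \<le> 1"
  shows "c + (1 - \<theta>) * (y - c) \<in> {1 + m..\<Lambda> - m}" and "\<bar>c + (1 - \<theta>) * (y - c) - y\<bar> \<le> m"
proof -
  have yc: "\<bar>y - c\<bar> \<le> (\<Lambda> - 1) / 2"
    using y unfolding c_def by (auto simp: abs_le_iff field_simps)
  have "\<bar>1 - \<theta>\<bar> * \<bar>y - c\<bar> \<le> (1 - \<theta>) * ((\<Lambda> - 1) / 2)"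
    using \<theta> by (simp only: abs_of_nonneg) (intro mult_left_mono yc; simp)
  then have "\<bar>(1 - \<theta>) * (y - c)\<bar> \<le> (1 - \<theta>) * ((\<Lambda> - 1) / 2)"
    by (simp only: abs_mult)
  then show "c + (1 - \<theta>) * (y - c) \<in> {1 + m..\<Lambda> - m}"
    unfolding m_def c_def by (auto simp: abs_le_iff field_simps)
  have "c + (1 - \<theta>) * (y - c) - y = - \<theta> * (y - c)" by (simp add: algebra_simps)
  moreover have "\<theta> * \<bar>y - c\<bar> \<le> \<theta> * ((\<Lambda> - 1) / 2)" using yc \<theta>(1) by (rule mult_left_mono)
  ultimately show "\<bar>c + (1 - \<theta>) * (y - c) - y\<bar> \<le> m"
    unfolding m_def using \<theta> by (simp add: abs_mult)
qed

definition pinning_coefficients :: "real \<Rightarrow> (real^'d \<Rightarrow> real) set" where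
  "pinning_coefficients \<Lambda> =
     {a. zperiodic a \<and> smooth_fun a \<and> (\<forall>x. a x \<in> {1..\<Lambda>}) \<and> (\<exists>s1 s2. pinning_shell a s1 s2)}"

lemma pinning_coefficients_dense:
  fixes g :: "real^'d \<Rightarrow> real"
  assumes \<Lambda>: "1 < \<Lambda>" and per: "zperiodic g" and g: "continuous_on UNIV g"
    and range: "\<forall>x. g x \<in> {1..\<Lambda>}" and \<delta>: "0 < \<delta>"
  shows "\<exists>a\<in>pinning_coefficients \<Lambda>. \<forall>x. \<bar>a x - g x\<bar> < \<delta>"
proof -
  \<comment> \<open>Shrink \<open>g\<close> towards the midpoint of \<open>[1, \<Lambda>]\<close> to make room for the two perturbations that follow.\<close>
  define \<theta> where "\<theta> = min 1 (\<delta> / (\<Lambda> - 1))"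
  have \<theta>: "0 < \<theta>" "\<theta> \<le> 1" "\<theta> * (\<Lambda> - 1) \<le> \<delta>"
    using \<delta> \<Lambda> by (auto simp: \<theta>_def min_def field_simps)
  define m where "m = \<theta> * (\<Lambda> - 1) / 2"
  have m: "0 < m" "2 * m \<le> \<delta>" unfolding m_def using \<theta> \<Lambda> by auto
  define c where "c = (1 + \<Lambda>) / 2"
  define g1 where "g1 x = c + (1 - \<theta>) * (g x - c)" for x
  have g1_range: "1 + m \<le> g1 x \<and> g1 x \<le> \<Lambda> - m" and g1_g: "\<bar>g1 x - g x\<bar> \<le> m" for x
    using shrink_to_midpoint[of "g x" \<Lambda> \<theta>] range \<theta>(1,2) unfolding g1_def c_def m_def by auto
  have "zperiodic g1" using per unfolding zperiodic_def g1_def by simp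
  moreover have "continuous_on UNIV g1" unfolding g1_def by (intro continuous_intros g)
  moreover have "0 < m / 2" using m by simp
  ultimately obtain p where p: "zperiodic p" "smooth_fun p" "\<And>x. \<bar>p x - g1 x\<bar> < m / 2"
    by (rule periodic_smooth_approx) blast
  have "1 + m / 2 \<le> p z \<and> p z \<le> \<Lambda> - m / 2" for z
    using p(3)[of z] g1_range[of z] unfolding abs_less_iff by linarith
  then obtain a where a: "zperiodic a" "smooth_fun a" "\<forall>x. a x \<in> {1..\<Lambda>}" "\<exists>s1 s2. pinning_shell a s1 s2"
    "\<forall>x. \<bar>a x - p x\<bar> \<le> m / 2"
    using pinning_perturbation_exists[OF p(1,2) _ \<open>0 < m / 2\<close>] by blast
  have "\<bar>a x - g x\<bar> < \<delta>" for x
    using a(5)[rule_format, of x] p(3)[of x] g1_g[of x] m by linarith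
  then show ?thesis using a(1-4) unfolding pinning_coefficients_def by blast
qed

theorem corollary1p2:
  fixes \<Lambda> :: real
  assumes "CARD('d) \<ge> 2" and "\<Lambda> > 1"
  shows "\<exists>\<F> :: (real^'d \<Rightarrow> real) set.
     (\<forall>a\<in>\<F>. zperiodic a \<and> smooth_fun a \<and> (\<forall>x. a x \<in> {1..\<Lambda>})) \<and>
     (\<forall>g. zperiodic g \<and> continuous_on UNIV g \<and> (\<forall>x. g x \<in> {1..\<Lambda>}) \<longrightarrow>
        (\<forall>\<delta>>0. \<exists>a\<in>\<F>. \<forall>x. \<bar>a x - g x\<bar> < \<delta>)) \<and>
     (\<forall>a\<in>\<F>. \<forall>u0 :: real^'d \<Rightarrow> real. \<forall>u :: real \<Rightarrow> real^'d \<Rightarrow> real \<Rightarrow> real.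
        uniformly_continuous_on UNIV u0 \<and> (\<forall>eps>0. visc_solution a eps u0 (u eps)) \<longrightarrow>
        (\<forall>x. \<forall>t>0. hr_limsup u x t \<ge> ereal (u0 x) \<and> ereal (u0 x) \<ge> hr_liminf u x t))"
proof -
  \<comment> \<open>The argument works in every dimension, and continuity of \<open>u0\<close> suffices.\<close>
  have "\<forall>a\<in>pinning_coefficients \<Lambda>. zperiodic a \<and> smooth_fun a \<and> (\<forall>x. a x \<in> {1..\<Lambda>})"
    unfolding pinning_coefficients_def by blast
  moreover have "\<forall>g. zperiodic g \<and> continuous_on UNIV g \<and> (\<forall>x. g x \<in> {1..\<Lambda>}) \<longrightarrow>
      (\<forall>\<delta>>0. \<exists>a\<in>pinning_coefficients \<Lambda>. \<forall>x. \<bar>a x - g x\<bar> < \<delta>)"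
    using pinning_coefficients_dense[OF assms(2)] by blast
  moreover have "\<forall>a\<in>pinning_coefficients \<Lambda>. \<forall>u0 :: real^'d \<Rightarrow> real. \<forall>u :: real \<Rightarrow> real^'d \<Rightarrow> real \<Rightarrow> real.
      uniformly_continuous_on UNIV u0 \<and> (\<forall>eps>0. visc_solution a eps u0 (u eps)) \<longrightarrow>
      (\<forall>x. \<forall>t>0. hr_limsup u x t \<ge> ereal (u0 x) \<and> ereal (u0 x) \<ge> hr_liminf u x t)"
  proof (intro ballI allI impI)
    fix a u0 u x and t :: real
    assume a: "a \<in> pinning_coefficients \<Lambda>"
      and sol: "uniformly_continuous_on UNIV u0 \<and> (\<forall>eps>0. visc_solution a eps u0 (u eps))" and t: "0 < t"
    obtain s1 s2 where pin: "pinning_shell a s1 s2" using a unfolding pinning_coefficients_def by blast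
    have smooth: "Ck 2 a" and nonneg: "\<And>z. 0 \<le> a z"
      using a unfolding pinning_coefficients_def smooth_fun_def by (auto intro: order_trans[of 0 1])
    show "hr_limsup u x t \<ge> ereal (u0 x) \<and> ereal (u0 x) \<ge> hr_liminf u x t"
      using half_relaxed_limits_pinned[OF pin nonneg smooth uniformly_continuous_imp_continuous _ t] sol
      by blast
  qed
  ultimately show ?thesis by (intro exI[of _ "pinning_coefficients \<Lambda>"] conjI)
qed

end
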